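(* Let $\mathcal F$ be a reward class, compact under $\|\cdot\|_{\infty,\mathrm{supp}(\pi_0)}$, with $\sup_{R\in\mathcal F}\|R\|_{\infty,\mathrm{supp}(\pi_0)}\le B$. Fix a truth reward $R^\star\in\mathcal F$, let $a^\star:=a_{R^\star}$ and $\mathcal G^\star(R):=\mathbb E_{X\sim d_0}[R^\star(X,a^\star(X))-R^\star(X,a_R(X))]$, and consider the greedy online loop described in the context with class $\mathcal F$ and truth $R^\star$. Fix $\varepsilon_0>0$ and let $\gamma>0$ be such that for every round $t\ge1$, every realized history up to time $t-1$, and every $R\in\mathcal F$ with $\mathcal G^\star(R)\ge\varepsilon_0$, \[ \mathbb E[\ell_t(R)-\ell_t(R^\star)\mid\mathscr H_{t-1}]\ge\gamma. \] Let $\ell_{\max}:=\log K+2B$, $N_\gamma:=\mathcal N(\mathcal F,\gamma/32,\|\cdot\|_{\infty,\mathrm{supp}(\pi_0)})$, $c_\gamma:=\gamma^2/(128\ell_{\max}^2)$. Then: (i) for every $t\ge1$, $\mathbb P(\mathcal G^\star(\widehat R_t)\ge\varepsilon_0)\le2N_\gamma e^{-c_\gamma t}$; (ii) with probability $1$, only finitely many $t$ satisfy $\mathcal G^\star(\widehat R_t)\ge\varepsilon_0$; (iii) with $N_{\varepsilon_0}(\infty):=\sum_{t=0}^\infty\mathbf 1\{\mathcal G^\star(\widehat R_t)\ge\varepsilon_0\}$, \[ \mathbb E[N_{\varepsilon_0}(\infty)]\le1+\Big\lceil\tfrac1{c_\gamma}\log(2N_\gamma)\Big\rceil+\frac1{e^{c_\gamma}-1}.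 \]
   Context: $\mathcal X$ is a measurable space with distribution $d_0$; $\mathcal A$ is a separable metric space; $\pi_0:\mathcal X\to\Delta(\mathcal A)$ a Markov kernel, $S_x:=\mathrm{supp}(\pi_0(\cdot\mid x))$ its topological support, $\|f\|_{\infty,\mathrm{supp}(\pi_0)}:=\sup\{|f(x,a)|:x\in\mathcal X,a\in S_x\}$. A fixed measurable tie-breaking rule assigns to each reward $R$ a measurable $a_R$ with $a_R(x)\in\arg\max_{a\in S_x}R(x,a)$. $K\ge2$; $\mathbf v_R(x,\mathbf a)=(R(x,a_1),\dots,R(x,a_K))$; $P_R(y=k\mid x,\mathbf a)=e^{R(x,a_k)}/\sum_\ell e^{R(x,a_\ell)}$; $\ell(\mathbf v,y)=\log\sum_ke^{v_k}-v_y$. $\mathcal N(\mathcal F,\varepsilon,\|\cdot\|)$ is the $\varepsilon$-covering number. Greedy loop with tilt $\eta>0$: $\pi_R(\cdot\mid x)$ has density $e^{\eta R(x,a)}/\int e^{\eta R(x,a')}\pi_0(da'\mid x)$ w.r.t. $\pi_0(\cdot\mid x)$. $\widehat R_0\equiv0$, $\pi_1=\pi_0$; for $t\ge1$: $x_t\sim d_0$ i.i.d.; $a_{t,1},\dots,a_{t,K}$ i.i.d. from $\pi_t(\cdot\mid x_t)$; $y_t\sim P_{R^\star}(\cdot\mid x_t,\mathbf a_t)$; $\widehat R_t\in\arg\min_{R\in\mathcal F}\frac1t\sum_{s=1}^t\ell(\mathbf v_R(x_s,\mathbf a_s),y_s)$ via a fixed measurable selection; $\pi_{t+1}=\pi_{\widehat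 R_t}$. $\mathscr H_t$ is the $\sigma$-algebra generated by the first $t$ rounds and $\ell_t(R):=\ell(\mathbf v_R(x_t,\mathbf a_t),y_t)$. *)

theory Defs
  imports "HOL-Probability.Probability"
begin

definition supp_pi0 :: "('x \<Rightarrow> 'a::topological_space measure) \<Rightarrow> 'x \<Rightarrow> 'a set" where
  "supp_pi0 pi0 x = {a. \<forall>U. open U \<and> a \<in> U \<longrightarrow> emeasure (pi0 x) U > 0}"

text \<open>\<open>|f| <= c\<close> on supp(pi0), i.e. \<open>||f||_{\<infinity>,supp(pi0)} <= c\<close> (sup over x in the space of d0).\<close>
definition supp_le :: "'x measure \<Rightarrow> ('x \<Rightarrow> 'a::topological_space measure) \<Rightarrow>
    ('x \<Rightarrow> 'a \<Rightarrow> real) \<Rightarrow> real \<Rightarrow> bool" where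
  "supp_le d0 pi0 f c \<longleftrightarrow> (\<forall>x\<in>space d0. \<forall>a\<in>supp_pi0 pi0 x. \<bar>f x a\<bar> \<le> c)"

text \<open>Compactness of a reward class w.r.t. the (pseudo)norm \<open>||.||_{\<infinity>,supp(pi0)}\<close>,
  in its sequential form (equivalent to compactness for pseudometrics).\<close>
definition supp_compact :: "'x measure \<Rightarrow> ('x \<Rightarrow> 'a::topological_space measure) \<Rightarrow>
    ('x \<Rightarrow> 'a \<Rightarrow> real) set \<Rightarrow> bool" where
  "supp_compact d0 pi0 F \<longleftrightarrow>
     (\<forall>f::nat \<Rightarrow> ('x \<Rightarrow> 'a \<Rightarrow> real). (\<forall>n. f n \<in> F) \<longrightarrow>
        (\<exists>R\<in>F. \<exists>r::nat \<Rightarrow> nat. strict_mono r \<and>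
           (\<forall>\<epsilon>>0. \<exists>N. \<forall>n\<ge>N. supp_le d0 pi0 (\<lambda>x a. f (r n) x a - R x a) \<epsilon>)))"

definition covering_number :: "'x measure \<Rightarrow> ('x \<Rightarrow> 'a::topological_space measure) \<Rightarrow>
    ('x \<Rightarrow> 'a \<Rightarrow> real) set \<Rightarrow> real \<Rightarrow> nat" where
  "covering_number d0 pi0 F \<epsilon> =
     (LEAST n. \<exists>C. finite C \<and> card C = n \<and>
        (\<forall>R\<in>F. \<exists>c\<in>C. supp_le d0 pi0 (\<lambda>x a. R x a - c x a) \<epsilon>))"

definition tie_break_rule :: "'x measure \<Rightarrow> ('x \<Rightarrow> 'a::topological_space measure) \<Rightarrow>
    ('x \<Rightarrow> 'a \<Rightarrow> real) set \<Rightarrow> (('x \<Rightarrow> 'a \<Rightarrow> real) \<Rightarrow> 'x \<Rightarrow> 'a) \<Rightarrow> bool" where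
  "tie_break_rule d0 pi0 F aR \<longleftrightarrow>
     (\<forall>R\<in>F. aR R \<in> d0 \<rightarrow>\<^sub>M borel \<and>
        (\<forall>x\<in>space d0. aR R x \<in> supp_pi0 pi0 x \<and>
           (\<forall>a\<in>supp_pi0 pi0 x. R x a \<le> R x (aR R x))))"

definition gap :: "'x measure \<Rightarrow> (('x \<Rightarrow> 'a \<Rightarrow> real) \<Rightarrow> 'x \<Rightarrow> 'a) \<Rightarrow>
    ('x \<Rightarrow> 'a \<Rightarrow> real) \<Rightarrow> ('x \<Rightarrow> 'a \<Rightarrow> real) \<Rightarrow> real" where
  "gap d0 aR Rs R = (\<integral>x. Rs x (aR Rs x) - Rs x (aR R x) \<partial>d0)"

definition tilt :: "real \<Rightarrow> ('x \<Rightarrow> 'a measure) \<Rightarrow> ('x \<Rightarrow> 'a \<Rightarrow> real) \<Rightarrow> 'x \<Rightarrow> 'a measure" where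
  "tilt \<eta> pi0 R x =
     density (pi0 x) (\<lambda>a. ennreal (exp (\<eta> * R x a) / (\<integral>a'. exp (\<eta> * R x a') \<partial>pi0 x)))"

text \<open>Multinomial-logit choice probability \<open>P_R(y = k | x, a)\<close>, indices \<open>0..K-1\<close>.\<close>
definition choice_prob :: "nat \<Rightarrow> ('x \<Rightarrow> 'a \<Rightarrow> real) \<Rightarrow> 'x \<Rightarrow> (nat \<Rightarrow> 'a) \<Rightarrow> nat \<Rightarrow> real" where
  "choice_prob K R x a k = exp (R x (a k)) / (\<Sum>l<K. exp (R x (a l)))"

definition mloss :: "nat \<Rightarrow> ('x \<Rightarrow> 'a \<Rightarrow> real) \<Rightarrow> 'x \<Rightarrow> (nat \<Rightarrow> 'a) \<Rightarrow> nat \<Rightarrow> real" where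
  "mloss K R x a y = ln (\<Sum>k<K. exp (R x (a k))) - R x (a y)"

definition obsM :: "nat \<Rightarrow> 'x measure \<Rightarrow> ('x \<times> (nat \<Rightarrow> 'a::topological_space) \<times> nat) measure" where
  "obsM K d0 = d0 \<Otimes>\<^sub>M (PiM {..<K} (\<lambda>_. borel) \<Otimes>\<^sub>M count_space {..<K})"

definition hist :: "'w measure \<Rightarrow> nat \<Rightarrow> 'x measure \<Rightarrow> (nat \<Rightarrow> 'w \<Rightarrow> 'x) \<Rightarrow>
    (nat \<Rightarrow> 'w \<Rightarrow> nat \<Rightarrow> 'a::topological_space) \<Rightarrow> (nat \<Rightarrow> 'w \<Rightarrow> nat) \<Rightarrow> nat \<Rightarrow> 'w measure" where
  "hist M K d0 X A Y t =
     sigma (space M)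
       (\<Union>s\<in>{1..t}. {(\<lambda>\<omega>. (X s \<omega>, A s \<omega>, Y s \<omega>)) -` E \<inter> space M | E. E \<in> sets (obsM K d0)})"

text \<open>Law of one round when the current policy is \<open>pi_{R'}\<close>:
  \<open>x ~ d0\<close>, \<open>a_1..a_K\<close> i.i.d. from \<open>pi_{R'}(.|x)\<close>, \<open>y ~ P_{R*}(.|x,a)\<close>.\<close>
definition step_law :: "nat \<Rightarrow> real \<Rightarrow> 'x measure \<Rightarrow> ('x \<Rightarrow> 'a measure) \<Rightarrow>
    ('x \<Rightarrow> 'a \<Rightarrow> real) \<Rightarrow> ('x \<Rightarrow> 'a \<Rightarrow> real) \<Rightarrow> ('x \<times> (nat \<Rightarrow> 'a) \<times> nat) set \<Rightarrow> ennreal" where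
  "step_law K \<eta> d0 pi0 Rs R' E =
     (\<integral>\<^sup>+x. (\<integral>\<^sup>+a. (\<Sum>y<K. ennreal (choice_prob K Rs x a y) * indicator E (x, a, y))
              \<partial>(PiM {..<K} (\<lambda>_. tilt \<eta> pi0 R' x))) \<partial>d0)"

definition round_loss :: "nat \<Rightarrow> (nat \<Rightarrow> 'w \<Rightarrow> 'x) \<Rightarrow> (nat \<Rightarrow> 'w \<Rightarrow> nat \<Rightarrow> 'a) \<Rightarrow>
    (nat \<Rightarrow> 'w \<Rightarrow> nat) \<Rightarrow> nat \<Rightarrow> ('x \<Rightarrow> 'a \<Rightarrow> real) \<Rightarrow> 'w \<Rightarrow> real" where
  "round_loss K X A Y t R \<omega> = mloss K R (X t \<omega>) (A t \<omega>) (Y t \<omega>)"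

text \<open>The greedy online loop with class F, truth Rs, tilt \<open>\<eta>\<close>, realised on the
  probability space M by observations X, A, Y (rounds t >= 1) and estimates Rh.\<close>
definition greedy_loop :: "'w measure \<Rightarrow> nat \<Rightarrow> real \<Rightarrow> 'x measure \<Rightarrow> ('x \<Rightarrow> 'a::topological_space measure) \<Rightarrow>
    ('x \<Rightarrow> 'a \<Rightarrow> real) set \<Rightarrow> ('x \<Rightarrow> 'a \<Rightarrow> real) \<Rightarrow>
    (nat \<Rightarrow> 'w \<Rightarrow> 'x) \<Rightarrow> (nat \<Rightarrow> 'w \<Rightarrow> nat \<Rightarrow> 'a) \<Rightarrow> (nat \<Rightarrow> 'w \<Rightarrow> nat) \<Rightarrow>
    (nat \<Rightarrow> 'w \<Rightarrow> ('x \<Rightarrow> 'a \<Rightarrow> real)) \<Rightarrow> bool" where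
  "greedy_loop M K \<eta> d0 pi0 F Rs X A Y Rh \<longleftrightarrow>
     prob_space M \<and>
     (\<forall>t\<ge>1. X t \<in> M \<rightarrow>\<^sub>M d0 \<and> A t \<in> M \<rightarrow>\<^sub>M PiM {..<K} (\<lambda>_. borel) \<and>
             Y t \<in> M \<rightarrow>\<^sub>M count_space {..<K}) \<and>
     \<comment> \<open>conditional law of round t given \<open>\<H>_{t-1}\<close>: policy \<open>pi_t = pi_{Rh_{t-1}}\<close>\<close>
     (\<forall>t\<ge>1. \<forall>H\<in>sets (hist M K d0 X A Y (t - 1)). \<forall>E\<in>sets (obsM K d0).
        emeasure M (H \<inter> {\<omega>\<in>space M. (X t \<omega>, A t \<omega>, Y t \<omega>) \<in> E})
          = (\<integral>\<^sup>+\<omega>\<in>H. step_law K \<eta> d0 pi0 Rs (Rh (t - 1) \<omega>) E \<partial>M)) \<and>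
     \<comment> \<open>\<open>Rh_0 = 0\<close>\<close>
     (\<forall>\<omega>\<in>space M. Rh 0 \<omega> = (\<lambda>x a. 0)) \<and>
     \<comment> \<open>\<open>Rh_t\<close>: empirical risk minimiser over F, a measurable function of the history\<close>
     (\<forall>t\<ge>1. \<forall>\<omega>\<in>space M. Rh t \<omega> \<in> F \<and>
        (\<forall>R\<in>F. (1 / real t) * (\<Sum>s\<in>{1..t}. round_loss K X A Y s (Rh t \<omega>) \<omega>)
                 \<le> (1 / real t) * (\<Sum>s\<in>{1..t}. round_loss K X A Y s R \<omega>))) \<and>
     (\<forall>t. (\<lambda>(\<omega>, x, a). Rh t \<omega> x a)
            \<in> borel_measurable (hist M K d0 X A Y t \<Otimes>\<^sub>M (d0 \<Otimes>\<^sub>M borel)))"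

end

theory Submission
  imports Defs
begin

text \<open>
  For a fixed reward \<open>R\<close> with gap at least \<open>\<epsilon>0\<close>, the per-round excess losses
  \<open>\<ell>\<^sub>s(R) - \<ell>\<^sub>s(R\<^sup>*)\<close> are bounded by \<open>\<ell>\<^sub>m\<^sub>a\<^sub>x\<close> (the actions lie almost surely in the
  support of \<open>\<pi>\<^sub>0\<close>, where rewards are bounded by \<open>B\<close>) and have conditional mean at least
  \<open>\<gamma>\<close>. A Chernoff argument for the exponential supermartingale \<open>exp (-\<theta> \<Sum>\<^sub>s (\<ell>\<^sub>s(R) - \<ell>\<^sub>s(R\<^sup>*)))\<close>
  shows that their sum over the first \<open>t\<close> rounds stays below \<open>\<gamma> t / 8\<close> only with probability
  \<open>exp (-c\<^sub>\<gamma> t)\<close>. The empirical risk minimiser \<open>R\<^sub>t\<close> has cumulative loss at most that of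
  \<open>R\<^sup>*\<close>, hence so does, up to \<open>\<gamma> t / 8\<close>, every reward within \<open>\<gamma>/16\<close> of it. Covering the
  bad rewards by at most \<open>N\<^sub>\<gamma>\<close> bad rewards and taking a union bound gives (i); the bounds
  \<open>min 1 (N\<^sub>\<gamma> exp (-c\<^sub>\<gamma> t))\<close> are summable, which gives (ii) by Borel-Cantelli and (iii)
  by summation.
\<close>

lemma exp_le_one_plus_x_plus_sq:
  fixes x :: real
  assumes "\<bar>x\<bar> \<le> 1"
  shows "exp x \<le> 1 + x + x\<^sup>2"
proof (cases "x \<ge> 0")
  case True
  then show ?thesis using exp_bound assms by simp
next
  case False
  \<comment> \<open>\<open>(1 + x + x\<^sup>2) (1 - x) = 1 - x\<^sup>3 \<ge> 1\<close> and \<open>exp (- x) \<ge> 1 - x\<close>\<close>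
  have "1 \<le> (1 + x + x\<^sup>2) * (1 - x)"
    using False mult_nonpos_nonneg[of x "x * x"] by (simp add: algebra_simps power2_eq_square)
  also have "\<dots> \<le> (1 + x + x\<^sup>2) * exp (- x)"
  proof (rule mult_left_mono)
    have "1 + x + x\<^sup>2 = (x + 1 / 2)\<^sup>2 + 3 / 4"
      by (simp add: power2_eq_square algebra_simps)
    then show "0 \<le> 1 + x + x\<^sup>2" by simp
  qed (use exp_ge_add_one_self[of "- x"] in simp)
  finally show ?thesis by (simp add: exp_minus field_simps)
qed

lemma mult_exp_neg_ceiling_le_1:
  fixes N c :: real
  assumes N: "1 \<le> N" and c: "0 < c"
  shows "N * exp (- c * real_of_int \<lceil>(1 / c) * ln (2 * N)\<rceil>) \<le> 1"
proof -
  have "ln N \<le> ln (2 * N)"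
    using N by simp
  also have "\<dots> = c * ((1 / c) * ln (2 * N))"
    using c by simp
  also have "\<dots> \<le> c * real_of_int \<lceil>(1 / c) * ln (2 * N)\<rceil>"
    using c by (intro mult_left_mono) auto
  finally have "N \<le> exp (c * real_of_int \<lceil>(1 / c) * ln (2 * N)\<rceil>)"
    using N ln_le_cancel_iff[of N "exp (c * real_of_int \<lceil>(1 / c) * ln (2 * N)\<rceil>)"] by simp
  then show ?thesis
    by (simp add: exp_minus field_simps)
qed

lemma exp_neg_geometric_sums:
  fixes c :: real
  assumes "0 < c"
  shows "(\<lambda>n. exp (- c) * exp (- c) ^ n) sums (1 / (exp c - 1))"
proof -
  have "(\<lambda>n. exp (- c) * exp (- c) ^ n) sums (exp (- c) * (1 / (1 - exp (- c))))"
    using assms by (intro sums_mult geometric_sums) simp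
  also have "exp (- c) * (1 / (1 - exp (- c))) = 1 / (exp c - 1)"
    using assms by (simp add: exp_minus field_simps)
  finally show ?thesis .
qed

lemma suminf_min_one_exp_le:
  fixes N c :: real
  assumes N: "1 \<le> N" and c: "0 < c"
  shows "(\<Sum>t. ennreal (min 1 (N * exp (- c * real t))))
    \<le> ennreal (1 + real_of_int \<lceil>(1 / c) * ln (2 * N)\<rceil> + 1 / (exp c - 1))"
proof -
  define f where "f t = min 1 (N * exp (- c * real t))" for t
  define T where "T = nat \<lceil>(1 / c) * ln (2 * N)\<rceil>"
  have T: "real T = real_of_int \<lceil>(1 / c) * ln (2 * N)\<rceil>"
    unfolding T_def using N c by simp
  note geom = exp_neg_geometric_sums[OF c]
  have tail: "f (n + Suc T) \<le> exp (- c) * exp (- c) ^ n" for n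
  proof -
    have "f (n + Suc T) \<le> N * exp (- c * real T) * (exp (- c) * exp (- c) ^ n)"
      unfolding f_def by (simp add: algebra_simps flip: exp_of_nat_mult exp_add)
    also have "\<dots> \<le> exp (- c) * exp (- c) ^ n"
      using mult_exp_neg_ceiling_le_1[OF N c] N unfolding T by (intro mult_left_le_one_le) auto
    finally show ?thesis .
  qed
  have f_nonneg: "0 \<le> f t" for t
    unfolding f_def using N by simp
  have tail_summable: "summable (\<lambda>n. f (n + Suc T))"
    using f_nonneg tail by (intro summable_comparison_test'[OF sums_summable[OF geom]]) auto
  then have f_summable: "summable f"
    by (rule summable_iff_shift[THEN iffD1])
  have "(\<Sum>t. f t) = (\<Sum>n. f (n + Suc T)) + (\<Sum>t<Suc T. f t)"
    by (rule suminf_split_initial_segment[OF f_summable])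
  also have "\<dots> \<le> 1 / (exp c - 1) + real (Suc T)"
  proof (rule add_mono)
    show "(\<Sum>n. f (n + Suc T)) \<le> 1 / (exp c - 1)"
      using tail tail_summable sums_summable[OF geom] sums_unique[OF geom] suminf_le by metis
    show "(\<Sum>t<Suc T. f t) \<le> real (Suc T)"
      using sum_mono[of "{..<Suc T}" f "\<lambda>_. 1"] by (simp add: f_def)
  qed
  finally have "ennreal (\<Sum>t. f t) \<le> ennreal (1 + real T + 1 / (exp c - 1))"
    by (intro ennreal_leI) simp
  then show ?thesis
    using suminf_ennreal2[OF f_nonneg f_summable] by (simp add: f_def T)
qed

section \<open>Exponential tail bounds for sums with a conditional drift\<close>

lemma integrable_mult_AE_bounded:
  fixes P g :: "'a \<Rightarrow> real"
  assumes P: "integrable M P" and g: "g \<in> borel_measurable M" "AE \<omega> in M. \<bar>g \<omega>\<bar> \<le> c"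
  shows "integrable M (\<lambda>\<omega>. P \<omega> * g \<omega>)"
proof (rule Bochner_Integration.integrable_bound[OF integrable_mult_right[OF P, of c]])
  show "AE \<omega> in M. norm (P \<omega> * g \<omega>) \<le> norm (c * P \<omega>)"
    using g(2)
  proof eventually_elim
    case (elim \<omega>)
    then have "\<bar>P \<omega>\<bar> * \<bar>g \<omega>\<bar> \<le> \<bar>P \<omega>\<bar> * \<bar>c\<bar>"
      by (intro mult_left_mono) auto
    then show ?case by (simp add: abs_mult mult.commute)
  qed
qed (use P g(1) borel_measurable_integrable in simp)

lemma integral_mult_exp_le_quadratic:
  fixes P Z :: "'a \<Rightarrow> real"
  assumes P: "integrable M P" "AE \<omega> in M. 0 \<le> P \<omega>"
    and Z: "Z \<in> borel_measurable M" "AE \<omega> in M. \<bar>Z \<omega>\<bar> \<le> L"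
    and \<theta>: "0 \<le> \<theta>" "\<theta> * L \<le> 1"
  shows "integrable M (\<lambda>\<omega>. P \<omega> * exp (- \<theta> * Z \<omega>))"
    and "integrable M (\<lambda>\<omega>. P \<omega> * Z \<omega>)"
    and "integrable M (\<lambda>\<omega>. P \<omega> * (Z \<omega>)\<^sup>2)"
    and "(\<integral>\<omega>. P \<omega> * exp (- \<theta> * Z \<omega>) \<partial>M)
      \<le> (\<integral>\<omega>. P \<omega> \<partial>M) - \<theta> * (\<integral>\<omega>. P \<omega> * Z \<omega> \<partial>M) + \<theta>\<^sup>2 * (\<integral>\<omega>. P \<omega> * (Z \<omega>)\<^sup>2 \<partial>M)"
proof -
  have \<theta>Z: "AE \<omega> in M. \<bar>- \<theta> * Z \<omega>\<bar> \<le> 1"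
    using Z(2)
  proof eventually_elim
    case (elim \<omega>)
    then have "\<theta> * \<bar>Z \<omega>\<bar> \<le> \<theta> * L" using \<theta>(1) by (rule mult_left_mono)
    then show ?case using \<theta> by (simp add: abs_mult)
  qed
  then have "AE \<omega> in M. \<bar>exp (- \<theta> * Z \<omega>)\<bar> \<le> exp 1"
    by eventually_elim simp
  moreover have "(\<lambda>\<omega>. exp (- \<theta> * Z \<omega>)) \<in> borel_measurable M"
    using Z(1) by measurable
  ultimately show PE: "integrable M (\<lambda>\<omega>. P \<omega> * exp (- \<theta> * Z \<omega>))"
    using P(1) by (intro integrable_mult_AE_bounded)
  show PZ: "integrable M (\<lambda>\<omega>. P \<omega> * Z \<omega>)"
    using P(1) Z by (rule integrable_mult_AE_bounded)
  have "AE \<omega> in M. \<bar>(Z \<omega>)\<^sup>2\<bar> \<le> L\<^sup>2"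
    using Z(2) by eventually_elim (simp add: power2_le_iff_abs_le[OF order_trans[OF abs_ge_zero]])
  then show PZ2: "integrable M (\<lambda>\<omega>. P \<omega> * (Z \<omega>)\<^sup>2)"
    using P(1) Z(1) by (intro integrable_mult_AE_bounded) measurable
  have "AE \<omega> in M. P \<omega> * exp (- \<theta> * Z \<omega>)
      \<le> P \<omega> - \<theta> * (P \<omega> * Z \<omega>) + \<theta>\<^sup>2 * (P \<omega> * (Z \<omega>)\<^sup>2)"
    using \<theta>Z P(2)
  proof eventually_elim
    case (elim \<omega>)
    have "exp (- \<theta> * Z \<omega>) \<le> 1 + - \<theta> * Z \<omega> + (- \<theta> * Z \<omega>)\<^sup>2"
      using elim(1) by (rule exp_le_one_plus_x_plus_sq)
    then have "P \<omega> * exp (- \<theta> * Z \<omega>) \<le> P \<omega> * (1 + - \<theta> * Z \<omega> + (- \<theta> * Z \<omega>)\<^sup>2)"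
      using elim(2) by (rule mult_left_mono)
    then show ?case by (simp add: algebra_simps power2_eq_square)
  qed
  then have "(\<integral>\<omega>. P \<omega> * exp (- \<theta> * Z \<omega>) \<partial>M)
      \<le> (\<integral>\<omega>. P \<omega> - \<theta> * (P \<omega> * Z \<omega>) + \<theta>\<^sup>2 * (P \<omega> * (Z \<omega>)\<^sup>2) \<partial>M)"
    using PE P(1) PZ PZ2 by (intro integral_mono_AE) auto
  also have "\<dots> = (\<integral>\<omega>. P \<omega> \<partial>M) - \<theta> * (\<integral>\<omega>. P \<omega> * Z \<omega> \<partial>M)
      + \<theta>\<^sup>2 * (\<integral>\<omega>. P \<omega> * (Z \<omega>)\<^sup>2 \<partial>M)"
    using P(1) PZ PZ2 by simp
  finally show "(\<integral>\<omega>. P \<omega> * exp (- \<theta> * Z \<omega>) \<partial>M)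
      \<le> (\<integral>\<omega>. P \<omega> \<partial>M) - \<theta> * (\<integral>\<omega>. P \<omega> * Z \<omega> \<partial>M) + \<theta>\<^sup>2 * (\<integral>\<omega>. P \<omega> * (Z \<omega>)\<^sup>2 \<partial>M)" .
qed

lemma (in prob_space) drift_le_bound:
  assumes G: "sigma_finite_subalgebra M G"
    and Z: "Z \<in> borel_measurable M" "AE \<omega> in M. \<bar>Z \<omega>\<bar> \<le> L"
    and drift: "AE \<omega> in M. \<gamma> \<le> real_cond_exp M G Z \<omega>"
  shows "\<gamma> \<le> L"
proof -
  interpret G: sigma_finite_subalgebra M G by (rule G)
  have Z_int: "integrable M Z"
    using Z by (intro integrable_const_bound[where B = L]) auto
  have "\<gamma> \<le> (\<integral>\<omega>. real_cond_exp M G Z \<omega> \<partial>M)"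
    using G.real_cond_exp_int(1)[OF Z_int] drift by (rule integral_ge_const)
  also have "\<dots> = (\<integral>\<omega>. Z \<omega> \<partial>M)"
    by (rule G.real_cond_exp_int(2)[OF Z_int])
  also have "\<dots> \<le> L"
    using Z(2) by (intro integral_le_const[OF Z_int]) (auto simp: abs_le_iff)
  finally show ?thesis .
qed

lemma (in prob_space) integral_weighted_drift_le:
  assumes G: "sigma_finite_subalgebra M G"
    and P: "integrable M P" "P \<in> borel_measurable G" "AE \<omega> in M. 0 \<le> P \<omega>"
    and Z: "Z \<in> borel_measurable M" "integrable M (\<lambda>\<omega>. P \<omega> * Z \<omega>)"
    and drift: "AE \<omega> in M. \<gamma> \<le> real_cond_exp M G Z \<omega>"
  shows "\<gamma> * (\<integral>\<omega>. P \<omega> \<partial>M) \<le> (\<integral>\<omega>. P \<omega> * Z \<omega> \<partial>M)"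
proof -
  interpret G: sigma_finite_subalgebra M G by (rule G)
  have "\<gamma> * (\<integral>\<omega>. P \<omega> \<partial>M) = (\<integral>\<omega>. P \<omega> * \<gamma> \<partial>M)"
    by simp
  also have "\<dots> \<le> (\<integral>\<omega>. P \<omega> * real_cond_exp M G Z \<omega> \<partial>M)"
  proof (rule integral_mono_AE)
    show "AE \<omega> in M. P \<omega> * \<gamma> \<le> P \<omega> * real_cond_exp M G Z \<omega>"
      using drift P(3) by eventually_elim (rule mult_left_mono)
  qed (use G.real_cond_exp_intg(1)[OF Z(2) P(2) Z(1)] P(1) in auto)
  also have "\<dots> = (\<integral>\<omega>. P \<omega> * Z \<omega> \<partial>M)"
    by (rule G.real_cond_exp_intg(2)[OF Z(2) P(2) Z(1)])
  finally show ?thesis .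
qed

lemma (in prob_space) integral_mult_exp_drift_le:
  assumes G: "sigma_finite_subalgebra M G"
    and P: "integrable M P" "P \<in> borel_measurable G" "AE \<omega> in M. 0 \<le> P \<omega>"
    and Z: "Z \<in> borel_measurable M" "AE \<omega> in M. \<bar>Z \<omega>\<bar> \<le> L"
    and drift: "AE \<omega> in M. \<gamma> \<le> real_cond_exp M G Z \<omega>"
    and \<theta>: "0 \<le> \<theta>" "\<theta> * L \<le> 1"
  shows "integrable M (\<lambda>\<omega>. P \<omega> * exp (- \<theta> * Z \<omega>))"
    and "(\<integral>\<omega>. P \<omega> * exp (- \<theta> * Z \<omega>) \<partial>M) \<le> (1 - \<theta> * \<gamma> + \<theta>\<^sup>2 * L\<^sup>2) * (\<integral>\<omega>. P \<omega> \<partial>M)"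
proof -
  note quadratic = integral_mult_exp_le_quadratic[OF P(1,3) Z \<theta>]
  show "integrable M (\<lambda>\<omega>. P \<omega> * exp (- \<theta> * Z \<omega>))"
    by (rule quadratic(1))
  have "\<gamma> * (\<integral>\<omega>. P \<omega> \<partial>M) \<le> (\<integral>\<omega>. P \<omega> * Z \<omega> \<partial>M)"
    using G P Z(1) quadratic(2) drift by (rule integral_weighted_drift_le)
  moreover have "(\<integral>\<omega>. P \<omega> * (Z \<omega>)\<^sup>2 \<partial>M) \<le> (\<integral>\<omega>. P \<omega> * L\<^sup>2 \<partial>M)"
  proof (rule integral_mono_AE)
    show "AE \<omega> in M. P \<omega> * (Z \<omega>)\<^sup>2 \<le> P \<omega> * L\<^sup>2"
      using Z(2) P(3)
      by eventually_elim (simp add: mult_left_mono power2_le_iff_abs_le[OF order_trans[OF abs_ge_zero]])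
  qed (use quadratic(3) P(1) in auto)
  ultimately have "(\<integral>\<omega>. P \<omega> \<partial>M) - \<theta> * (\<integral>\<omega>. P \<omega> * Z \<omega> \<partial>M) + \<theta>\<^sup>2 * (\<integral>\<omega>. P \<omega> * (Z \<omega>)\<^sup>2 \<partial>M)
      \<le> (\<integral>\<omega>. P \<omega> \<partial>M) - \<theta> * (\<gamma> * (\<integral>\<omega>. P \<omega> \<partial>M)) + \<theta>\<^sup>2 * (L\<^sup>2 * (\<integral>\<omega>. P \<omega> \<partial>M))"
    using \<theta>(1) by (intro add_mono diff_mono mult_left_mono) (auto simp: mult.commute)
  with quadratic(4) show "(\<integral>\<omega>. P \<omega> * exp (- \<theta> * Z \<omega>) \<partial>M) \<le> (1 - \<theta> * \<gamma> + \<theta>\<^sup>2 * L\<^sup>2) * (\<integral>\<omega>. P \<omega> \<partial>M)"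
    by (simp add: algebra_simps)
qed

lemma (in prob_space) drift_exp_moment:
  assumes G: "\<And>t. sigma_finite_subalgebra M (G t)"
    and Z_adapted: "\<And>s t. 1 \<le> s \<Longrightarrow> s \<le> t \<Longrightarrow> Z s \<in> borel_measurable (G t)"
    and Z_bounded: "\<And>s. 1 \<le> s \<Longrightarrow> AE \<omega> in M. \<bar>Z s \<omega>\<bar> \<le> L"
    and drift: "\<And>t. AE \<omega> in M. \<gamma> \<le> real_cond_exp M (G t) (Z (Suc t)) \<omega>"
    and \<theta>: "0 \<le> \<theta>" "\<theta> * L \<le> 1" and \<gamma>_le: "\<gamma> \<le> L"
  shows "integrable M (\<lambda>\<omega>. exp (- \<theta> * (\<Sum>s\<in>{1..t}. Z s \<omega>)))
    \<and> (\<integral>\<omega>. exp (- \<theta> * (\<Sum>s\<in>{1..t}. Z s \<omega>)) \<partial>M) \<le> (1 - \<theta> * \<gamma> + \<theta>\<^sup>2 * L\<^sup>2) ^ t"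
proof (induction t)
  case 0
  then show ?case by simp
next
  case (Suc t)
  let ?P = "\<lambda>\<omega>. exp (- \<theta> * (\<Sum>s\<in>{1..t}. Z s \<omega>))"
  have split: "exp (- \<theta> * (\<Sum>s\<in>{1..Suc t}. Z s \<omega>)) = ?P \<omega> * exp (- \<theta> * Z (Suc t) \<omega>)" for \<omega>
    by (simp add: sum.cl_ivl_Suc mult_exp_exp algebra_simps)
  have [measurable]: "(\<lambda>\<omega>. \<Sum>s\<in>{1..t}. Z s \<omega>) \<in> borel_measurable (G t)"
    using Z_adapted by (intro borel_measurable_sum) auto
  then have P_G: "?P \<in> borel_measurable (G t)" by measurable
  have Z_M: "Z (Suc t) \<in> borel_measurable M"
    using Z_adapted[of "Suc t" "Suc t"] by (intro measurable_from_subalg[OF sigma_finite_subalgebra.subalg[OF G]]) auto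
  note step = integral_mult_exp_drift_le[OF G Suc.IH[THEN conjunct1] P_G _ Z_M Z_bounded drift \<theta>]
  have "\<theta> * \<gamma> \<le> \<theta> * L"
    using \<gamma>_le \<theta>(1) by (rule mult_left_mono)
  then have q: "0 \<le> 1 - \<theta> * \<gamma> + \<theta>\<^sup>2 * L\<^sup>2"
    using \<theta>(2) by (smt (verit) zero_le_power2 mult_nonneg_nonneg)
  show ?case
    unfolding split
  proof
    show "integrable M (\<lambda>\<omega>. ?P \<omega> * exp (- \<theta> * Z (Suc t) \<omega>))"
      using step(1) by simp
    have "(\<integral>\<omega>. ?P \<omega> * exp (- \<theta> * Z (Suc t) \<omega>) \<partial>M) \<le> (1 - \<theta> * \<gamma> + \<theta>\<^sup>2 * L\<^sup>2) * (\<integral>\<omega>. ?P \<omega> \<partial>M)"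
      using step(2) by simp
    also have "\<dots> \<le> (1 - \<theta> * \<gamma> + \<theta>\<^sup>2 * L\<^sup>2) * (1 - \<theta> * \<gamma> + \<theta>\<^sup>2 * L\<^sup>2) ^ t"
      using Suc.IH q by (intro mult_left_mono) auto
    finally show "(\<integral>\<omega>. ?P \<omega> * exp (- \<theta> * Z (Suc t) \<omega>) \<partial>M) \<le> (1 - \<theta> * \<gamma> + \<theta>\<^sup>2 * L\<^sup>2) ^ Suc t"
      by simp
  qed
qed

lemma (in prob_space) drift_lower_tail:
  assumes G: "\<And>t. sigma_finite_subalgebra M (G t)"
    and Z_adapted: "\<And>s t. 1 \<le> s \<Longrightarrow> s \<le> t \<Longrightarrow> Z s \<in> borel_measurable (G t)"
    and Z_bounded: "\<And>s. 1 \<le> s \<Longrightarrow> AE \<omega> in M. \<bar>Z s \<omega>\<bar> \<le> L"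
    and drift: "\<And>t. AE \<omega> in M. \<gamma> \<le> real_cond_exp M (G t) (Z (Suc t)) \<omega>"
    and \<gamma>: "0 < \<gamma>"
  shows "prob {\<omega>\<in>space M. (\<Sum>s\<in>{1..t}. Z s \<omega>) \<le> \<gamma> * real t / 8}
    \<le> exp (- (\<gamma>\<^sup>2 / (128 * L\<^sup>2)) * real t)"
proof -
  let ?S = "\<lambda>\<omega>. \<Sum>s\<in>{1..t}. Z s \<omega>"
  have Z_M: "Z s \<in> borel_measurable M" if "1 \<le> s" for s
    using Z_adapted[of s s] that by (intro measurable_from_subalg[OF sigma_finite_subalgebra.subalg[OF G]]) auto
  have \<gamma>_le: "\<gamma> \<le> L"
    using G Z_M Z_bounded drift by (intro drift_le_bound[of "G 0" "Z 1"]) auto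
  then have L: "0 < L" using \<gamma> by simp
  define \<theta> where "\<theta> = \<gamma> / (2 * L\<^sup>2)"
  have \<theta>: "0 \<le> \<theta>" "\<theta> * L \<le> 1"
    using \<gamma> \<gamma>_le L by (auto simp: \<theta>_def power2_eq_square field_simps)
  define q where "q = 1 - \<theta> * \<gamma> + \<theta>\<^sup>2 * L\<^sup>2"
  define c where "c = exp (- \<theta> * (\<gamma> * real t / 8))"
  have moment: "integrable M (\<lambda>\<omega>. exp (- \<theta> * ?S \<omega>)) \<and> (\<integral>\<omega>. exp (- \<theta> * ?S \<omega>) \<partial>M) \<le> q ^ t"
    unfolding q_def using G Z_adapted Z_bounded drift \<theta> \<gamma>_le by (rule drift_exp_moment)
  have [measurable]: "?S \<in> borel_measurable M"
    using Z_M by (intro borel_measurable_sum) auto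
  have "{\<omega>\<in>space M. ?S \<omega> \<le> \<gamma> * real t / 8} \<subseteq> {\<omega>\<in>space M. c \<le> exp (- \<theta> * ?S \<omega>)}"
  proof safe
    fix \<omega> assume "?S \<omega> \<le> \<gamma> * real t / 8"
    then have "\<theta> * ?S \<omega> \<le> \<theta> * (\<gamma> * real t / 8)" using \<theta>(1) by (rule mult_left_mono)
    then show "c \<le> exp (- \<theta> * ?S \<omega>)" by (simp add: c_def)
  qed
  then have "prob {\<omega>\<in>space M. ?S \<omega> \<le> \<gamma> * real t / 8} \<le> prob {\<omega>\<in>space M. c \<le> exp (- \<theta> * ?S \<omega>)}"
    by (rule finite_measure_mono) measurable
  also have "\<dots> \<le> (\<integral>\<omega>. exp (- \<theta> * ?S \<omega>) \<partial>M) / c"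
    using moment by (intro integral_Markov_inequality_measure) (auto simp: c_def)
  also have "\<dots> \<le> q ^ t / c"
    using moment by (intro divide_right_mono) (auto simp: c_def)
  also have "\<dots> \<le> exp (- \<theta> * \<gamma> + \<theta>\<^sup>2 * L\<^sup>2) ^ t / c"
  proof -
    have "\<theta> * \<gamma> \<le> \<theta> * L" using \<gamma>_le \<theta>(1) by (rule mult_left_mono)
    then have "0 \<le> q" unfolding q_def using \<theta>(2) by (smt (verit) zero_le_power2 mult_nonneg_nonneg)
    moreover have "q \<le> exp (- \<theta> * \<gamma> + \<theta>\<^sup>2 * L\<^sup>2)"
      unfolding q_def using exp_ge_add_one_self[of "- \<theta> * \<gamma> + \<theta>\<^sup>2 * L\<^sup>2"] by linarith
    ultimately show ?thesis by (intro divide_right_mono power_mono) (auto simp: c_def)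
  qed
  also have "\<dots> = exp (real t * (- \<theta> * \<gamma> + \<theta>\<^sup>2 * L\<^sup>2) - (- \<theta> * (\<gamma> * real t / 8)))"
    by (simp only: c_def exp_diff exp_of_nat_mult)
  also have "\<dots> = exp (- (3 * \<gamma>\<^sup>2 / (16 * L\<^sup>2)) * real t)"
    using L by (simp add: \<theta>_def power2_eq_square field_simps)
  also have "\<dots> \<le> exp (- (\<gamma>\<^sup>2 / (128 * L\<^sup>2)) * real t)"
    using L by (auto simp: field_simps intro!: mult_right_mono)
  finally show ?thesis .
qed

lemma supp_pi0_iff_basis:
  assumes Bs: "topological_basis Bs" and sets: "sets (pi0 x) = sets borel"
  shows "a \<in> supp_pi0 pi0 x \<longleftrightarrow> (\<forall>U\<in>Bs. a \<in> U \<longrightarrow> emeasure (pi0 x) U \<noteq> 0)"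
proof
  assume "a \<in> supp_pi0 pi0 x"
  then show "\<forall>U\<in>Bs. a \<in> U \<longrightarrow> emeasure (pi0 x) U \<noteq> 0"
    using topological_basis_open[OF Bs] unfolding supp_pi0_def by fastforce
next
  assume nonnull: "\<forall>U\<in>Bs. a \<in> U \<longrightarrow> emeasure (pi0 x) U \<noteq> 0"
  show "a \<in> supp_pi0 pi0 x" unfolding supp_pi0_def
  proof (intro CollectI allI impI)
    fix U :: "'a set" assume U: "open U \<and> a \<in> U"
    then obtain V where V: "V \<in> Bs" "a \<in> V" "V \<subseteq> U"
      using topological_basisE[OF Bs] by metis
    have "emeasure (pi0 x) V \<le> emeasure (pi0 x) U"
      using sets U V topological_basis_open[OF Bs] by (intro emeasure_mono) auto
    moreover have "0 < emeasure (pi0 x) V"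
      using nonnull V by (simp add: zero_less_iff_neq_zero)
    ultimately show "0 < emeasure (pi0 x) U"
      by (rule order.strict_trans2[rotated])
  qed
qed

lemma AE_supp_pi0:
  fixes pi0 :: "'x \<Rightarrow> 'a::second_countable_topology measure"
  assumes sets: "sets (pi0 x) = sets borel"
  shows "AE a in pi0 x. a \<in> supp_pi0 pi0 x"
proof -
  obtain Bs :: "'a set set" where Bs: "countable Bs" "topological_basis Bs"
    using ex_countable_basis by blast
  have "AE a in pi0 x. \<forall>U\<in>{U\<in>Bs. emeasure (pi0 x) U = 0}. a \<notin> U"
  proof (rule AE_ball_countable')
    fix U assume "U \<in> {U\<in>Bs. emeasure (pi0 x) U = 0}"
    then have "U \<in> null_sets (pi0 x)"
      using sets topological_basis_open[OF Bs(2)] by (auto intro: null_setsI)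
    then show "AE a in pi0 x. a \<notin> U" by (rule AE_not_in)
  qed (use Bs(1) in simp)
  then show ?thesis
    by eventually_elim (auto simp: supp_pi0_iff_basis[of Bs pi0 x, OF Bs(2) sets])
qed

lemma pred_supp_pi0:
  fixes pi0 :: "'x \<Rightarrow> 'a::second_countable_topology measure"
  assumes pi0: "pi0 \<in> d0 \<rightarrow>\<^sub>M subprob_algebra borel"
  shows "Measurable.pred (d0 \<Otimes>\<^sub>M borel) (\<lambda>(x, a). a \<in> supp_pi0 pi0 x)"
proof -
  obtain Bs :: "'a set set" where Bs: "countable Bs" "topological_basis Bs"
    using ex_countable_basis by blast
  let ?null = "\<lambda>U. {p \<in> space (d0 \<Otimes>\<^sub>M borel). snd p \<in> U \<and> emeasure (pi0 (fst p)) U = 0}"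
  have "{p \<in> space (d0 \<Otimes>\<^sub>M borel). case p of (x, a) \<Rightarrow> a \<in> supp_pi0 pi0 x}
      = space (d0 \<Otimes>\<^sub>M borel) - (\<Union>U\<in>Bs. ?null U)"
    using supp_pi0_iff_basis[of Bs pi0, OF Bs(2) subprob_measurableD(2)[OF pi0]]
    by (auto simp: space_pair_measure)
  also have "\<dots> \<in> sets (d0 \<Otimes>\<^sub>M borel)"
  proof (intro sets.Diff sets.top sets.countable_UN''[OF Bs(1)])
    fix U assume "U \<in> Bs"
    then have [measurable]: "U \<in> sets borel"
      using topological_basis_open[OF Bs(2)] by auto
    have [measurable]: "(\<lambda>x. emeasure (pi0 x) U) \<in> borel_measurable d0"
      using measurable_emeasure_subprob_algebra[of U borel] pi0 by (rule measurable_compose[rotated]) simp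
    show "?null U \<in> sets (d0 \<Otimes>\<^sub>M borel)" by measurable
  qed
  finally show ?thesis by (simp only: pred_def)
qed

lemma AE_tilt:
  assumes "(\<lambda>a. R x a) \<in> borel_measurable (pi0 x)" and "AE a in pi0 x. P a"
  shows "AE a in tilt \<eta> pi0 R x. P a"
  unfolding tilt_def using assms by (subst AE_density) (auto elim!: eventually_mono)

lemma prob_space_tilt:
  assumes P: "prob_space (pi0 x)"
    and R_meas: "(\<lambda>a. R x a) \<in> borel_measurable (pi0 x)"
    and R_bounded: "AE a in pi0 x. \<bar>R x a\<bar> \<le> B"
  shows "prob_space (tilt \<eta> pi0 R x)"
proof -
  interpret P: prob_space "pi0 x" by (rule P)
  define f where "f a = exp (\<eta> * R x a)" for a
  define Z where "Z = (\<integral>a. f a \<partial>pi0 x)"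
  have f_meas: "f \<in> borel_measurable (pi0 x)"
    unfolding f_def using R_meas by measurable
  have f_bounds: "AE a in pi0 x. exp (- \<bar>\<eta>\<bar> * B) \<le> f a \<and> f a \<le> exp (\<bar>\<eta>\<bar> * B)"
    using R_bounded
  proof eventually_elim
    case (elim a)
    then have "\<bar>\<eta> * R x a\<bar> \<le> \<bar>\<eta>\<bar> * B"
      by (simp add: abs_mult mult_left_mono)
    then show ?case by (auto simp: f_def abs_le_iff)
  qed
  have f_int: "integrable (pi0 x) f"
    using f_bounds f_meas
    by (intro P.integrable_const_bound[where B = "exp (\<bar>\<eta>\<bar> * B)"]) (auto elim!: eventually_mono simp: f_def)
  have "exp (- \<bar>\<eta>\<bar> * B) \<le> Z"
    unfolding Z_def using f_int f_bounds by (intro P.integral_ge_const) auto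
  then have Z_pos: "0 < Z"
    using exp_gt_zero[of "- \<bar>\<eta>\<bar> * B"] by linarith
  have tilt_eq: "tilt \<eta> pi0 R x = density (pi0 x) (\<lambda>a. ennreal (f a / Z))"
    unfolding tilt_def f_def Z_def ..
  have "(\<lambda>a. ennreal (f a / Z)) \<in> borel_measurable (pi0 x)"
    using f_meas by measurable
  then have "emeasure (tilt \<eta> pi0 R x) (space (tilt \<eta> pi0 R x)) = (\<integral>\<^sup>+a. ennreal (f a / Z) \<partial>pi0 x)"
    unfolding tilt_eq by (subst emeasure_density) (auto intro!: nn_integral_cong)
  also have "\<dots> = ennreal (\<integral>a. f a / Z \<partial>pi0 x)"
    using Z_pos by (intro nn_integral_eq_integral integrable_divide AE_I2 f_int) (simp add: f_def)
  also have "\<dots> = 1"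
    using Z_pos unfolding Z_def by simp
  finally show ?thesis by (rule prob_spaceI)
qed

lemma ln_sum_exp_le_add:
  fixes u v :: "nat \<Rightarrow> real"
  assumes K: "0 < K" and le: "\<And>k. k < K \<Longrightarrow> u k \<le> v k + d"
  shows "ln (\<Sum>k<K. exp (u k)) \<le> ln (\<Sum>k<K. exp (v k)) + d"
proof -
  have pos: "0 < (\<Sum>k<K. exp (w k))" for w :: "nat \<Rightarrow> real"
    using K by (intro sum_pos) auto
  have "(\<Sum>k<K. exp (u k)) \<le> (\<Sum>k<K. exp d * exp (v k))"
    using le by (intro sum_mono) (auto simp: mult_exp_exp add.commute)
  also have "\<dots> = exp d * (\<Sum>k<K. exp (v k))"
    by (simp add: sum_distrib_left)
  finally have "ln (\<Sum>k<K. exp (u k)) \<le> ln (exp d * (\<Sum>k<K. exp (v k)))"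
    using pos by (subst ln_le_cancel_iff) auto
  also have "\<dots> = d + ln (\<Sum>k<K. exp (v k))"
    using pos[of v] by (simp add: ln_mult)
  finally show ?thesis by simp
qed

lemma mloss_nonneg:
  assumes "y < K"
  shows "0 \<le> mloss K R x a y"
proof -
  have "exp (R x (a y)) \<le> (\<Sum>k<K. exp (R x (a k)))"
    using assms by (intro member_le_sum) auto
  then have "R x (a y) \<le> ln (\<Sum>k<K. exp (R x (a k)))"
    by (metis exp_gt_zero ln_exp ln_le_cancel_iff order_less_le_trans)
  then show ?thesis unfolding mloss_def by simp
qed

lemma mloss_le:
  assumes y: "y < K" and R: "\<And>k. k < K \<Longrightarrow> \<bar>R x (a k)\<bar> \<le> B"
  shows "mloss K R x a y \<le> ln (real K) + 2 * B"
proof -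
  have "ln (\<Sum>k<K. exp (R x (a k))) \<le> ln (\<Sum>k<K. exp 0) + B"
    using y R by (intro ln_sum_exp_le_add) (auto simp: abs_le_iff)
  moreover have "- R x (a y) \<le> B"
    using R[OF y] by simp
  ultimately show ?thesis unfolding mloss_def by simp
qed

lemma mloss_le_mloss_add:
  assumes y: "y < K" and RR': "\<And>k. k < K \<Longrightarrow> \<bar>R x (a k) - R' x (a k)\<bar> \<le> d"
  shows "mloss K R x a y \<le> mloss K R' x a y + 2 * d"
proof -
  have "ln (\<Sum>k<K. exp (R x (a k))) \<le> ln (\<Sum>k<K. exp (R' x (a k))) + d"
    using y RR' by (intro ln_sum_exp_le_add) (force simp: abs_le_iff)+
  moreover have "- R x (a y) \<le> - R' x (a y) + d"
    using RR'[OF y] by simp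
  ultimately show ?thesis unfolding mloss_def by simp
qed

lemma measurable_mloss:
  assumes R: "(\<lambda>(x, a). R x a) \<in> borel_measurable (d0 \<Otimes>\<^sub>M borel)"
  shows "(\<lambda>(x, a, y). mloss K R x a y) \<in> borel_measurable (obsM K d0)"
proof -
  have R_k: "(\<lambda>(x, a, y). R x (a k)) \<in> borel_measurable (obsM K d0)" if "k < K" for k
  proof -
    have "(\<lambda>(x, a, y). (x, a k)) \<in> obsM K d0 \<rightarrow>\<^sub>M d0 \<Otimes>\<^sub>M borel"
      unfolding obsM_def by measurable (simp add: that)
    from measurable_compose[OF this R] show ?thesis by (simp add: case_prod_beta)
  qed
  have "(\<lambda>p. (\<lambda>(x, a, y). R x (a k)) p) \<in> borel_measurable (obsM K d0)" if "k \<in> {..<K}" for k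
    using R_k that by simp
  moreover have "(\<lambda>(x, a, y). y) \<in> obsM K d0 \<rightarrow>\<^sub>M count_space {..<K}"
    unfolding obsM_def by measurable
  ultimately have "(\<lambda>p. (\<lambda>(x, a, y). R x (a ((\<lambda>(x, a, y). y) p))) p) \<in> borel_measurable (obsM K d0)"
    by (rule measurable_compose_countable'[where f = "\<lambda>k (x, a, y). R x (a k)"]) auto
  then have R_y: "(\<lambda>(x, a, y). R x (a y)) \<in> borel_measurable (obsM K d0)"
    by (simp add: case_prod_beta)
  have "(\<lambda>p. \<Sum>k<K. exp ((\<lambda>(x, a, y). R x (a k)) p)) \<in> borel_measurable (obsM K d0)"
    by (intro borel_measurable_sum measurable_compose[OF R_k borel_measurable_exp]) simp
  then have "(\<lambda>p. ln (\<Sum>k<K. exp ((\<lambda>(x, a, y). R x (a k)) p)) - (\<lambda>(x, a, y). R x (a y)) p)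
      \<in> borel_measurable (obsM K d0)"
    using R_y by (intro borel_measurable_diff borel_measurable_ln)
  then show ?thesis
    by (simp add: mloss_def case_prod_beta)
qed

section \<open>Coverings in the sup-norm on the support\<close>

lemma supp_le_diff_triangle:
  assumes "supp_le d0 pi0 (\<lambda>x a. f x a - g x a) e1" and "supp_le d0 pi0 (\<lambda>x a. g x a - h x a) e2"
  shows "supp_le d0 pi0 (\<lambda>x a. f x a - h x a) (e1 + e2)"
  using assms unfolding supp_le_def by (smt (verit, best))

lemma supp_le_diff_swap:
  assumes "supp_le d0 pi0 (\<lambda>x a. f x a - g x a) e"
  shows "supp_le d0 pi0 (\<lambda>x a. g x a - f x a) e"
  using assms unfolding supp_le_def by (simp add: abs_minus_commute)

lemma supp_compact_finite_cover:
  assumes compact: "supp_compact d0 pi0 F" and e: "0 < e"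
  shows "\<exists>C. finite C \<and> (\<forall>R\<in>F. \<exists>c\<in>C. supp_le d0 pi0 (\<lambda>x a. R x a - c x a) e)"
proof (rule ccontr)
  assume no_cover: "\<not> ?thesis"
  have "\<forall>C. \<exists>R. finite C \<longrightarrow> R \<in> F \<and> (\<forall>c\<in>C. \<not> supp_le d0 pi0 (\<lambda>x a. R x a - c x a) e)"
    using no_cover by blast
  then obtain sel where sel: "\<And>C. finite C \<Longrightarrow>
      sel C \<in> F \<and> (\<forall>c\<in>C. \<not> supp_le d0 pi0 (\<lambda>x a. sel C x a - c x a) e)"
    by (metis choice)
  \<comment> \<open>the greedy sequence: each term is \<open>e\<close>-far from all earlier ones\<close>
  define S where "S n = ((\<lambda>C. insert (sel C) C) ^^ n) {}" for n
  define f where "f n = sel (S n)" for n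
  have S_eq: "S n = f ` {..<n}" for n
    by (induction n) (simp_all add: S_def f_def lessThan_Suc)
  have S_finite: "finite (S n)" for n
    by (simp add: S_eq)
  have f_F: "f n \<in> F" for n
    using sel[OF S_finite] by (simp add: f_def)
  have f_far: "\<not> supp_le d0 pi0 (\<lambda>x a. f n x a - f m x a) e" if "m < n" for m n
  proof -
    have "f m \<in> S n"
      using that by (simp add: S_eq)
    then show ?thesis
      using sel[OF S_finite, of n] by (simp add: f_def)
  qed
  obtain R and r :: "nat \<Rightarrow> nat" where "strict_mono r"
    and conv: "\<forall>\<epsilon>>0. \<exists>N. \<forall>n\<ge>N. supp_le d0 pi0 (\<lambda>x a. f (r n) x a - R x a) \<epsilon>"
    using compact f_F unfolding supp_compact_def by blast
  obtain N where N: "\<forall>n\<ge>N. supp_le d0 pi0 (\<lambda>x a. f (r n) x a - R x a) (e / 2)"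
    using conv e by (meson half_gt_zero)
  have "supp_le d0 pi0 (\<lambda>x a. f (r (Suc N)) x a - R x a) (e / 2)"
    and "supp_le d0 pi0 (\<lambda>x a. f (r N) x a - R x a) (e / 2)"
    using N by simp_all
  then have "supp_le d0 pi0 (\<lambda>x a. f (r (Suc N)) x a - f (r N) x a) (e / 2 + e / 2)"
    by (blast intro: supp_le_diff_triangle supp_le_diff_swap)
  moreover have "r N < r (Suc N)"
    using \<open>strict_mono r\<close> by (simp add: strict_monoD)
  ultimately show False
    using f_far by simp
qed

lemma covering_number_cover:
  assumes "supp_compact d0 pi0 F" and "0 < e"
  shows "\<exists>C. finite C \<and> card C = covering_number d0 pi0 F e
    \<and> (\<forall>R\<in>F. \<exists>c\<in>C. supp_le d0 pi0 (\<lambda>x a. R x a - c x a) e)"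
proof -
  have "\<exists>n C. finite C \<and> card C = n \<and> (\<forall>R\<in>F. \<exists>c\<in>C. supp_le d0 pi0 (\<lambda>x a. R x a - c x a) e)"
    using supp_compact_finite_cover[OF assms] by blast
  from LeastI_ex[OF this] show ?thesis
    unfolding covering_number_def .
qed

lemma covering_number_pos:
  assumes "supp_compact d0 pi0 F" "0 < e" "F \<noteq> {}"
  shows "0 < covering_number d0 pi0 F e"
proof -
  obtain C where C: "finite C" "card C = covering_number d0 pi0 F e"
    "\<forall>R\<in>F. \<exists>c\<in>C. supp_le d0 pi0 (\<lambda>x a. R x a - c x a) e"
    using covering_number_cover[OF assms(1,2)] by blast
  then have "C \<noteq> {}"
    using assms(3) by blast
  then have "0 < card C"
    using C(1) by (simp add: card_gt_0_iff)
  then show ?thesis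
    using C(2) by simp
qed

lemma supp_cover_by_members:
  assumes C: "finite C" "\<forall>R\<in>F. \<exists>c\<in>C. supp_le d0 pi0 (\<lambda>x a. R x a - c x a) e" and S: "S \<subseteq> F"
  shows "\<exists>D\<subseteq>S. finite D \<and> card D \<le> card C
    \<and> (\<forall>R\<in>S. \<exists>c\<in>D. supp_le d0 pi0 (\<lambda>x a. R x a - c x a) (2 * e))"
proof -
  let ?near = "\<lambda>R c. supp_le d0 pi0 (\<lambda>x a. R x a - c x a) e"
  define J where "J = {c\<in>C. \<exists>R\<in>S. ?near R c}"
  have "\<forall>c. \<exists>R. c \<in> J \<longrightarrow> R \<in> S \<and> ?near R c"
    unfolding J_def by blast
  then obtain rep where rep: "\<And>c. c \<in> J \<Longrightarrow> rep c \<in> S \<and> ?near (rep c) c"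
    by (metis choice)
  have J: "finite J" "card J \<le> card C"
    using C(1) by (auto simp: J_def intro: card_mono)
  show ?thesis
  proof (intro exI conjI ballI)
    show "rep ` J \<subseteq> S" "finite (rep ` J)"
      using rep J by auto
    show "card (rep ` J) \<le> card C"
      using card_image_le[OF J(1), of rep] J(2) by linarith
    fix R assume R: "R \<in> S"
    then obtain c where c: "c \<in> C" "?near R c"
      using C(2) S by blast
    then have "c \<in> J" unfolding J_def using R by blast
    then show "\<exists>c\<in>rep ` J. supp_le d0 pi0 (\<lambda>x a. R x a - c x a) (2 * e)"
      unfolding mult_2 using rep c(2) supp_le_diff_triangle[OF _ supp_le_diff_swap] by blast
  qed
qed

lemma space_hist: "space (hist M K d0 X A Y t) = space M"
  unfolding hist_def by (simp add: space_measure_of_conv)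

lemma sets_hist: "sets (hist M K d0 X A Y t) = sigma_sets (space M)
    (\<Union>s\<in>{1..t}. {(\<lambda>\<omega>. (X s \<omega>, A s \<omega>, Y s \<omega>)) -` E \<inter> space M | E. E \<in> sets (obsM K d0)})"
  unfolding hist_def by (rule sets_measure_of) blast

lemma measurable_observation_hist:
  assumes obs: "(\<lambda>\<omega>. (X s \<omega>, A s \<omega>, Y s \<omega>)) \<in> M \<rightarrow>\<^sub>M obsM K d0" and s: "1 \<le> s" "s \<le> t"
  shows "(\<lambda>\<omega>. (X s \<omega>, A s \<omega>, Y s \<omega>)) \<in> hist M K d0 X A Y t \<rightarrow>\<^sub>M obsM K d0"
proof (rule measurableI)
  show "(X s \<omega>, A s \<omega>, Y s \<omega>) \<in> space (obsM K d0)" if "\<omega> \<in> space (hist M K d0 X A Y t)" for \<omega>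
    using measurable_space[OF obs] that by (simp add: space_hist)
  show "(\<lambda>\<omega>. (X s \<omega>, A s \<omega>, Y s \<omega>)) -` E \<inter> space (hist M K d0 X A Y t) \<in> sets (hist M K d0 X A Y t)"
    if "E \<in> sets (obsM K d0)" for E
  proof -
    have "(\<lambda>\<omega>. (X s \<omega>, A s \<omega>, Y s \<omega>)) -` E \<inter> space M
        \<in> {(\<lambda>\<omega>. (X s \<omega>, A s \<omega>, Y s \<omega>)) -` E \<inter> space M | E. E \<in> sets (obsM K d0)}"
      using that by blast
    then show ?thesis
      unfolding sets_hist space_hist by (rule sigma_sets.Basic[OF UN_I, rotated]) (use s in simp)
  qed
qed

lemma hist_sigma_finite_subalgebra:
  assumes "prob_space M"
    and obs: "\<And>s. 1 \<le> s \<Longrightarrow> (\<lambda>\<omega>. (X s \<omega>, A s \<omega>, Y s \<omega>)) \<in> M \<rightarrow>\<^sub>M obsM K d0"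
  shows "sigma_finite_subalgebra M (hist M K d0 X A Y t)"
proof -
  interpret prob_space M by fact
  have "subalgebra M (hist M K d0 X A Y t)"
    unfolding subalgebra_def space_hist sets_hist
    using measurable_sets[OF obs] by (auto intro!: sets.sigma_sets_subset)
  then have "finite_measure_subalgebra M (hist M K d0 X A Y t)"
    by unfold_locales
  then show ?thesis
    by (rule finite_measure_subalgebra_is_sigma_finite)
qed

definition unsupported_obs :: "nat \<Rightarrow> 'x measure \<Rightarrow> ('x \<Rightarrow> 'a::topological_space measure)
    \<Rightarrow> ('x \<times> (nat \<Rightarrow> 'a) \<times> nat) set" where
  "unsupported_obs K d0 pi0 =
     {p \<in> space (obsM K d0). \<exists>k<K. fst (snd p) k \<notin> supp_pi0 pi0 (fst p)}"

lemma sets_unsupported_obs: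
  fixes pi0 :: "'x \<Rightarrow> 'a::second_countable_topology measure"
  assumes pi0: "pi0 \<in> d0 \<rightarrow>\<^sub>M subprob_algebra borel"
  shows "unsupported_obs K d0 pi0 \<in> sets (obsM K d0)"
proof -
  have "Measurable.pred (obsM K d0) (\<lambda>p. fst (snd p) k \<in> supp_pi0 pi0 (fst p))" if "k < K" for k
  proof -
    have "(\<lambda>p. (fst p, fst (snd p) k)) \<in> obsM K d0 \<rightarrow>\<^sub>M d0 \<Otimes>\<^sub>M borel"
      unfolding obsM_def by measurable (simp add: that)
    from measurable_compose[OF this pred_supp_pi0[OF pi0]] show ?thesis by simp
  qed
  then have "Measurable.pred (obsM K d0) (\<lambda>p. \<exists>k<K. fst (snd p) k \<notin> supp_pi0 pi0 (fst p))"
    by measurable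
  then show ?thesis
    unfolding unsupported_obs_def pred_def .
qed

lemma step_law_unsupported_obs:
  fixes pi0 :: "'x \<Rightarrow> 'a::second_countable_topology measure"
  assumes pi0: "pi0 \<in> d0 \<rightarrow>\<^sub>M prob_algebra borel"
    and R_meas: "\<And>x. x \<in> space d0 \<Longrightarrow> (\<lambda>a. R x a) \<in> borel_measurable borel"
    and R_bounded: "\<And>x. x \<in> space d0 \<Longrightarrow> AE a in pi0 x. \<bar>R x a\<bar> \<le> C"
  shows "step_law K \<eta> d0 pi0 Rs R (unsupported_obs K d0 pi0) = 0"
proof -
  let ?f = "\<lambda>x a. \<Sum>y<K. ennreal (choice_prob K Rs x a y) * indicator (unsupported_obs K d0 pi0) (x, a, y)"
  have "(\<integral>\<^sup>+a. ?f x a \<partial>PiM {..<K} (\<lambda>_. tilt \<eta> pi0 R x)) = 0" if x: "x \<in> space d0" for x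
  proof -
    have sets: "sets (pi0 x) = sets borel" and P: "prob_space (pi0 x)"
      using measurable_space[OF pi0 x] by (auto simp: space_prob_algebra)
    have R_x: "(\<lambda>a. R x a) \<in> borel_measurable (pi0 x)"
      using R_meas[OF x] by (simp add: measurable_cong_sets[OF sets refl])
    have "AE a in PiM {..<K} (\<lambda>_. tilt \<eta> pi0 R x). \<forall>k\<in>{..<K}. a k \<in> supp_pi0 pi0 x"
      using prob_space_tilt[of pi0 x R C \<eta>, OF P R_x R_bounded[OF x]]
        AE_tilt[of R x pi0 _ \<eta>, OF R_x AE_supp_pi0[of pi0 x, OF sets]]
      by (intro eventually_ball_finite ballI AE_PiM_component) auto
    then have "AE a in PiM {..<K} (\<lambda>_. tilt \<eta> pi0 R x). ?f x a = 0"
      by eventually_elim (auto simp: unsupported_obs_def)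
    then have "(\<integral>\<^sup>+a. ?f x a \<partial>PiM {..<K} (\<lambda>_. tilt \<eta> pi0 R x))
        = (\<integral>\<^sup>+a. 0 \<partial>PiM {..<K} (\<lambda>_. tilt \<eta> pi0 R x))"
      by (rule nn_integral_cong_AE)
    then show ?thesis by simp
  qed
  then have "step_law K \<eta> d0 pi0 Rs R (unsupported_obs K d0 pi0) = (\<integral>\<^sup>+x. 0 \<partial>d0)"
    unfolding step_law_def by (rule nn_integral_cong)
  then show ?thesis by simp
qed

section \<open>Runs of the greedy loop\<close>

locale greedy_run =
  fixes M :: "'w measure"
    and d0 :: "'x measure"
    and pi0 :: "'x \<Rightarrow> 'a::second_countable_topology measure"
    and F :: "('x \<Rightarrow> 'a \<Rightarrow> real) set"
    and aR :: "('x \<Rightarrow> 'a \<Rightarrow> real) \<Rightarrow> 'x \<Rightarrow> 'a"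
    and Rs :: "'x \<Rightarrow> 'a \<Rightarrow> real"
    and K :: nat and \<eta> B \<epsilon>0 \<gamma> :: real
    and X :: "nat \<Rightarrow> 'w \<Rightarrow> 'x" and A :: "nat \<Rightarrow> 'w \<Rightarrow> nat \<Rightarrow> 'a" and Y :: "nat \<Rightarrow> 'w \<Rightarrow> nat"
    and Rh :: "nat \<Rightarrow> 'w \<Rightarrow> ('x \<Rightarrow> 'a \<Rightarrow> real)"
  assumes d0: "prob_space d0"
    and pi0_kernel: "pi0 \<in> d0 \<rightarrow>\<^sub>M prob_algebra borel"
    and K: "K \<ge> 2"
    and F_meas: "\<forall>R\<in>F. (\<lambda>(x, a). R x a) \<in> borel_measurable (d0 \<Otimes>\<^sub>M borel)"
    and F_compact: "supp_compact d0 pi0 F"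
    and F_bounded: "\<forall>R\<in>F. supp_le d0 pi0 R B"
    and Rs_in: "Rs \<in> F"
    and loop: "greedy_loop M K \<eta> d0 pi0 F Rs X A Y Rh"
    and gamma: "\<gamma> > 0"
    and margin: "\<forall>t\<ge>1. \<forall>R\<in>F. gap d0 aR Rs R \<ge> \<epsilon>0 \<longrightarrow>
        (AE \<omega> in M. real_cond_exp M (hist M K d0 X A Y (t - 1))
             (\<lambda>\<omega>. round_loss K X A Y t R \<omega> - round_loss K X A Y t Rs \<omega>) \<omega> \<ge> \<gamma>)"
begin

lemma loop_components:
  shows "prob_space M"
    and "\<forall>t\<ge>1. X t \<in> M \<rightarrow>\<^sub>M d0 \<and> A t \<in> M \<rightarrow>\<^sub>M PiM {..<K} (\<lambda>_. borel) \<and>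
            Y t \<in> M \<rightarrow>\<^sub>M count_space {..<K}"
    and "\<forall>t\<ge>1. \<forall>G\<in>sets (hist M K d0 X A Y (t - 1)). \<forall>E\<in>sets (obsM K d0).
        emeasure M (G \<inter> {\<omega>\<in>space M. (X t \<omega>, A t \<omega>, Y t \<omega>) \<in> E})
          = (\<integral>\<^sup>+\<omega>\<in>G. step_law K \<eta> d0 pi0 Rs (Rh (t - 1) \<omega>) E \<partial>M)"
    and "\<forall>\<omega>\<in>space M. Rh 0 \<omega> = (\<lambda>x a. 0)"
    and "\<forall>t\<ge>1. \<forall>\<omega>\<in>space M. Rh t \<omega> \<in> F \<and>
        (\<forall>R\<in>F. (1 / real t) * (\<Sum>s\<in>{1..t}. round_loss K X A Y s (Rh t \<omega>) \<omega>)
                 \<le> (1 / real t) * (\<Sum>s\<in>{1..t}. round_loss K X A Y s R \<omega>))"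
  using loop unfolding greedy_loop_def by blast+

sublocale prob_space M
  by (rule loop_components(1))

abbreviation "H \<equiv> hist M K d0 X A Y"

lemma observation_measurable: "1 \<le> s \<Longrightarrow> (\<lambda>\<omega>. (X s \<omega>, A s \<omega>, Y s \<omega>)) \<in> M \<rightarrow>\<^sub>M obsM K d0"
  using loop_components(2) unfolding obsM_def by (auto intro!: measurable_Pair)

lemma X_space: "1 \<le> s \<Longrightarrow> \<omega> \<in> space M \<Longrightarrow> X s \<omega> \<in> space d0"
  using loop_components(2) by (blast intro: measurable_space)

lemma Y_less:
  assumes "1 \<le> s" "\<omega> \<in> space M"
  shows "Y s \<omega> < K"
proof -
  have "Y s \<in> M \<rightarrow>\<^sub>M count_space {..<K}"
    using loop_components(2) assms(1) by blast
  from measurable_space[OF this assms(2)] show ?thesis by simp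
qed

lemma hist_subalgebra: "sigma_finite_subalgebra M (H t)"
  using prob_space_axioms observation_measurable by (rule hist_sigma_finite_subalgebra)

lemma round_law:
  assumes "1 \<le> t" "G \<in> sets (H (t - 1))" "E \<in> sets (obsM K d0)"
  shows "emeasure M (G \<inter> {\<omega>\<in>space M. (X t \<omega>, A t \<omega>, Y t \<omega>) \<in> E})
    = (\<integral>\<^sup>+\<omega>\<in>G. step_law K \<eta> d0 pi0 Rs (Rh (t - 1) \<omega>) E \<partial>M)"
  using loop_components(3) assms by blast

lemma initial_estimate: "\<omega> \<in> space M \<Longrightarrow> Rh 0 \<omega> = (\<lambda>x a. 0)"
  using loop_components(4) by blast

lemma estimate_in_F: "1 \<le> t \<Longrightarrow> \<omega> \<in> space M \<Longrightarrow> Rh t \<omega> \<in> F"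
  using loop_components(5) by blast

lemma estimate_minimises_loss:
  assumes "1 \<le> t" "\<omega> \<in> space M" "R \<in> F"
  shows "(\<Sum>s\<in>{1..t}. round_loss K X A Y s (Rh t \<omega>) \<omega>) \<le> (\<Sum>s\<in>{1..t}. round_loss K X A Y s R \<omega>)"
proof -
  have "(1 / real t) * (\<Sum>s\<in>{1..t}. round_loss K X A Y s (Rh t \<omega>) \<omega>)
      \<le> (1 / real t) * (\<Sum>s\<in>{1..t}. round_loss K X A Y s R \<omega>)"
    using loop_components(5) assms by blast
  then show ?thesis
    using assms(1) by (simp add: divide_le_cancel)
qed

lemma section_measurable:
  assumes "R \<in> F" "x \<in> space d0"
  shows "(\<lambda>a. R x a) \<in> borel_measurable borel"
proof -
  have "(\<lambda>(x, a). R x a) \<in> borel_measurable (d0 \<Otimes>\<^sub>M borel)"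
    using F_meas assms(1) by blast
  from measurable_compose[OF measurable_Pair1'[OF assms(2)] this] show ?thesis
    by simp
qed

lemma sets_pi0: "x \<in> space d0 \<Longrightarrow> sets (pi0 x) = sets borel"
  using measurable_space[OF pi0_kernel] by (simp add: space_prob_algebra)

lemma B_nonneg: "0 \<le> B"
proof -
  interpret d0: prob_space d0 by (rule d0)
  obtain x where x: "x \<in> space d0"
    using d0.not_empty by blast
  interpret pi0: prob_space "pi0 x"
    using measurable_space[OF pi0_kernel x] by (simp add: space_prob_algebra)
  have "\<exists>a. a \<in> supp_pi0 pi0 x"
  proof (rule ccontr)
    assume "\<nexists>a. a \<in> supp_pi0 pi0 x"
    then show False
      using AE_supp_pi0[of pi0 x, OF sets_pi0[OF x]] by simp
  qed
  then obtain a where "a \<in> supp_pi0 pi0 x" ..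
  then have "\<bar>Rs x a\<bar> \<le> B"
    using F_bounded Rs_in x unfolding supp_le_def by blast
  then show ?thesis by simp
qed

definition actions_in_support :: "'w \<Rightarrow> bool" where
  "actions_in_support \<omega> \<longleftrightarrow> (\<forall>s\<ge>1. \<forall>k<K. A s \<omega> k \<in> supp_pi0 pi0 (X s \<omega>))"

lemma estimate_section:
  assumes "\<omega> \<in> space M" "x \<in> space d0"
  shows "(\<lambda>a. Rh t \<omega> x a) \<in> borel_measurable borel"
    and "AE a in pi0 x. \<bar>Rh t \<omega> x a\<bar> \<le> B"
proof -
  have "(\<lambda>a. Rh t \<omega> x a) \<in> borel_measurable borel \<and> (AE a in pi0 x. \<bar>Rh t \<omega> x a\<bar> \<le> B)"
  proof (cases "t = 0")
    case True
    then show ?thesis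
      using initial_estimate assms(1) B_nonneg by simp
  next
    case False
    then have R: "Rh t \<omega> \<in> F"
      using estimate_in_F assms(1) by simp
    have "AE a in pi0 x. \<bar>Rh t \<omega> x a\<bar> \<le> B"
      using AE_supp_pi0[of pi0 x, OF sets_pi0[OF assms(2)]]
      by eventually_elim (use F_bounded R assms(2) in \<open>auto simp: supp_le_def\<close>)
    then show ?thesis
      using section_measurable[OF R assms(2)] by simp
  qed
  then show "(\<lambda>a. Rh t \<omega> x a) \<in> borel_measurable borel" "AE a in pi0 x. \<bar>Rh t \<omega> x a\<bar> \<le> B"
    by auto
qed

lemma step_law_estimate_unsupported:
  "\<omega> \<in> space M \<Longrightarrow> step_law K \<eta> d0 pi0 Rs (Rh t \<omega>) (unsupported_obs K d0 pi0) = 0"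
  by (rule step_law_unsupported_obs[OF pi0_kernel estimate_section])

lemma AE_round_actions_in_support:
  assumes s: "1 \<le> s"
  shows "AE \<omega> in M. \<forall>k<K. A s \<omega> k \<in> supp_pi0 pi0 (X s \<omega>)"
proof -
  let ?E = "unsupported_obs K d0 pi0"
  let ?S = "(\<lambda>\<omega>. (X s \<omega>, A s \<omega>, Y s \<omega>)) -` ?E \<inter> space M"
  have E: "?E \<in> sets (obsM K d0)"
    using pi0_kernel by (intro sets_unsupported_obs measurable_prob_algebraD)
  have S: "?S = space M \<inter> {\<omega>\<in>space M. (X s \<omega>, A s \<omega>, Y s \<omega>) \<in> ?E}"
    by blast
  have "emeasure M ?S = (\<integral>\<^sup>+\<omega>\<in>space M. step_law K \<eta> d0 pi0 Rs (Rh (s - 1) \<omega>) ?E \<partial>M)"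
    unfolding S using s sets.top[of "H (s - 1)"] E by (intro round_law) (simp_all add: space_hist)
  also have "\<dots> = (\<integral>\<^sup>+\<omega>. 0 \<partial>M)"
    by (intro nn_integral_cong) (simp add: step_law_estimate_unsupported)
  finally have "?S \<in> null_sets M"
    using measurable_sets[OF observation_measurable[OF s] E] by (intro null_setsI) simp_all
  then show ?thesis
  proof (rule AE_I')
    show "{\<omega>\<in>space M. \<not> (\<forall>k<K. A s \<omega> k \<in> supp_pi0 pi0 (X s \<omega>))} \<subseteq> ?S"
      using measurable_space[OF observation_measurable[OF s]] by (auto simp: unsupported_obs_def)
  qed
qed

lemma AE_actions_in_support: "AE \<omega> in M. actions_in_support \<omega>"
proof -
  have "AE \<omega> in M. \<forall>s. 1 \<le> s \<longrightarrow> (\<forall>k<K. A s \<omega> k \<in> supp_pi0 pi0 (X s \<omega>))"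
  proof (subst AE_all_countable, intro allI)
    show "AE \<omega> in M. 1 \<le> s \<longrightarrow> (\<forall>k<K. A s \<omega> k \<in> supp_pi0 pi0 (X s \<omega>))" for s
      using AE_round_actions_in_support[of s] by (cases "1 \<le> s") simp_all
  qed
  then show ?thesis
    unfolding actions_in_support_def by simp
qed

definition loss_bound :: real where
  "loss_bound = ln (real K) + 2 * B"

lemma loss_bound_pos: "0 < loss_bound"
proof -
  have "0 < ln (real K)"
    using K by (intro ln_gt_zero) simp
  then show ?thesis
    using B_nonneg unfolding loss_bound_def by simp
qed

lemma round_loss_bounds:
  assumes "\<omega> \<in> space M" "actions_in_support \<omega>" "1 \<le> s" "R \<in> F"
  shows "0 \<le> round_loss K X A Y s R \<omega>" and "round_loss K X A Y s R \<omega> \<le> loss_bound"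
proof -
  have "\<bar>R (X s \<omega>) (A s \<omega> k)\<bar> \<le> B" if "k < K" for k
    using assms that F_bounded X_space unfolding actions_in_support_def supp_le_def by blast
  then show "0 \<le> round_loss K X A Y s R \<omega>" "round_loss K X A Y s R \<omega> \<le> loss_bound"
    using Y_less[OF assms(3,1)] unfolding round_loss_def loss_bound_def
    by (auto intro: mloss_nonneg mloss_le)
qed

lemma round_loss_le_add:
  assumes "\<omega> \<in> space M" "actions_in_support \<omega>" "1 \<le> s"
    and "supp_le d0 pi0 (\<lambda>x a. R x a - R' x a) d"
  shows "round_loss K X A Y s R \<omega> \<le> round_loss K X A Y s R' \<omega> + 2 * d"
proof -
  have "\<bar>R (X s \<omega>) (A s \<omega> k) - R' (X s \<omega>) (A s \<omega> k)\<bar> \<le> d" if "k < K" for k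
    using assms that X_space unfolding actions_in_support_def supp_le_def by blast
  then show ?thesis
    using Y_less[OF assms(3,1)] unfolding round_loss_def by (rule mloss_le_mloss_add[rotated])
qed

definition excess_loss :: "('x \<Rightarrow> 'a \<Rightarrow> real) \<Rightarrow> nat \<Rightarrow> 'w \<Rightarrow> real" where
  "excess_loss R s \<omega> = round_loss K X A Y s R \<omega> - round_loss K X A Y s Rs \<omega>"

lemma excess_loss_bounded:
  assumes "\<omega> \<in> space M" "actions_in_support \<omega>" "1 \<le> s" "R \<in> F"
  shows "\<bar>excess_loss R s \<omega>\<bar> \<le> loss_bound"
  using round_loss_bounds[OF assms] round_loss_bounds[OF assms(1-3) Rs_in]
  unfolding excess_loss_def by linarith

lemma excess_loss_measurable:
  assumes "R \<in> F" "1 \<le> s" "s \<le> t"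
  shows "excess_loss R s \<in> borel_measurable (H t)"
proof -
  have "(\<lambda>\<omega>. round_loss K X A Y s R \<omega>) \<in> borel_measurable (H t)" if "R \<in> F" for R
  proof -
    have "(\<lambda>(x, a, y). mloss K R x a y) \<in> borel_measurable (obsM K d0)"
      using F_meas that by (intro measurable_mloss) blast
    from measurable_compose[OF measurable_observation_hist[of X s A Y M K d0 t] this]
    show ?thesis
      using observation_measurable assms(2,3) by (simp add: round_loss_def)
  qed
  then show ?thesis
    unfolding excess_loss_def[abs_def] using assms(1) Rs_in by measurable
qed

definition rate :: real where
  "rate = \<gamma>\<^sup>2 / (128 * loss_bound\<^sup>2)"

lemma excess_loss_tail:
  assumes "R \<in> F" "\<epsilon>0 \<le> gap d0 aR Rs R"
  shows "prob {\<omega>\<in>space M. (\<Sum>s\<in>{1..t}. excess_loss R s \<omega>) \<le> \<gamma> * real t / 8} \<le> exp (- rate * real t)"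
  unfolding rate_def
proof (rule drift_lower_tail[OF hist_subalgebra])
  show "excess_loss R s \<in> borel_measurable (H t)" if "1 \<le> s" "s \<le> t" for s t
    using assms(1) that by (rule excess_loss_measurable)
  show "AE \<omega> in M. \<bar>excess_loss R s \<omega>\<bar> \<le> loss_bound" if "1 \<le> s" for s
    using AE_actions_in_support AE_space
    by eventually_elim (use excess_loss_bounded assms(1) that in blast)
  show "AE \<omega> in M. \<gamma> \<le> real_cond_exp M (H t) (excess_loss R (Suc t)) \<omega>" for t
    using margin[rule_format, of "Suc t" R] assms unfolding excess_loss_def[abs_def] by simp
qed (rule gamma)

lemma excess_loss_sum_le:
  assumes t: "1 \<le> t" and \<omega>: "\<omega> \<in> space M" "actions_in_support \<omega>"
    and near: "supp_le d0 pi0 (\<lambda>x a. R x a - Rh t \<omega> x a) d"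
  shows "(\<Sum>s\<in>{1..t}. excess_loss R s \<omega>) \<le> 2 * d * real t"
proof -
  have "(\<Sum>s\<in>{1..t}. excess_loss R s \<omega>)
      = (\<Sum>s\<in>{1..t}. round_loss K X A Y s R \<omega>) - (\<Sum>s\<in>{1..t}. round_loss K X A Y s Rs \<omega>)"
    unfolding excess_loss_def by (simp add: sum_subtractf)
  also have "\<dots> \<le> (\<Sum>s\<in>{1..t}. round_loss K X A Y s (Rh t \<omega>) \<omega> + 2 * d)
      - (\<Sum>s\<in>{1..t}. round_loss K X A Y s Rs \<omega>)"
    using round_loss_le_add[OF \<omega> _ near] by (intro diff_right_mono sum_mono) simp
  also have "\<dots> \<le> 2 * d * real t"
    using estimate_minimises_loss[OF t \<omega>(1) Rs_in] by (simp add: sum.distrib)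
  finally show ?thesis .
qed

definition bad_net :: "('x \<Rightarrow> 'a \<Rightarrow> real) set" where
  "bad_net = (SOME D. D \<subseteq> {R\<in>F. \<epsilon>0 \<le> gap d0 aR Rs R} \<and> finite D
     \<and> card D \<le> covering_number d0 pi0 F (\<gamma> / 32)
     \<and> (\<forall>R\<in>{R\<in>F. \<epsilon>0 \<le> gap d0 aR Rs R}. \<exists>c\<in>D. supp_le d0 pi0 (\<lambda>x a. R x a - c x a) (\<gamma> / 16)))"

lemma bad_net:
  shows "bad_net \<subseteq> {R\<in>F. \<epsilon>0 \<le> gap d0 aR Rs R}" and "finite bad_net"
    and "card bad_net \<le> covering_number d0 pi0 F (\<gamma> / 32)"
    and "\<And>R. R \<in> F \<Longrightarrow> \<epsilon>0 \<le> gap d0 aR Rs R \<Longrightarrow>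
      \<exists>c\<in>bad_net. supp_le d0 pi0 (\<lambda>x a. R x a - c x a) (\<gamma> / 16)"
proof -
  let ?S = "{R\<in>F. \<epsilon>0 \<le> gap d0 aR Rs R}"
  obtain C where C: "finite C" "card C = covering_number d0 pi0 F (\<gamma> / 32)"
    "\<forall>R\<in>F. \<exists>c\<in>C. supp_le d0 pi0 (\<lambda>x a. R x a - c x a) (\<gamma> / 32)"
    using covering_number_cover[OF F_compact, of "\<gamma> / 32"] gamma by auto
  obtain D where D: "D \<subseteq> ?S" "finite D" "card D \<le> card C"
    "\<forall>R\<in>?S. \<exists>c\<in>D. supp_le d0 pi0 (\<lambda>x a. R x a - c x a) (2 * (\<gamma> / 32))"
    using supp_cover_by_members[OF C(1) C(3), of ?S] by blast
  have "\<exists>D. D \<subseteq> ?S \<and> finite D \<and> card D \<le> covering_number d0 pi0 F (\<gamma> / 32)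
     \<and> (\<forall>R\<in>?S. \<exists>c\<in>D. supp_le d0 pi0 (\<lambda>x a. R x a - c x a) (\<gamma> / 16))"
    using D C(2) by (intro exI[of _ D]) simp
  then have net: "bad_net \<subseteq> ?S \<and> finite bad_net \<and> card bad_net \<le> covering_number d0 pi0 F (\<gamma> / 32)
     \<and> (\<forall>R\<in>?S. \<exists>c\<in>bad_net. supp_le d0 pi0 (\<lambda>x a. R x a - c x a) (\<gamma> / 16))"
    unfolding bad_net_def by (rule someI_ex)
  then show "bad_net \<subseteq> ?S" "finite bad_net" "card bad_net \<le> covering_number d0 pi0 F (\<gamma> / 32)"
    by simp_all
  show "\<exists>c\<in>bad_net. supp_le d0 pi0 (\<lambda>x a. R x a - c x a) (\<gamma> / 16)"
    if "R \<in> F" "\<epsilon>0 \<le> gap d0 aR Rs R" for R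
    using net that by simp
qed

lemma covering_number_ge_1: "1 \<le> covering_number d0 pi0 F (\<gamma> / 32)"
proof -
  have "0 < covering_number d0 pi0 F (\<gamma> / 32)"
    using gamma Rs_in by (intro covering_number_pos[OF F_compact]) auto
  then show ?thesis by simp
qed

text \<open>
  The event \<open>\<epsilon>0 \<le> gap d0 aR Rs (Rh t \<omega>)\<close> need not be measurable in \<open>\<omega>\<close>; the following
  measurable events contain it almost surely and carry all the probability estimates.
\<close>

definition bad_cover :: "nat \<Rightarrow> 'w set" where
  "bad_cover t = (if t = 0 then space M
     else \<Union>R\<in>bad_net. {\<omega>\<in>space M. (\<Sum>s\<in>{1..t}. excess_loss R s \<omega>) \<le> \<gamma> * real t / 8})"

lemma sets_excess_loss_sum_le:
  assumes "R \<in> F"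
  shows "{\<omega>\<in>space M. (\<Sum>s\<in>{1..t}. excess_loss R s \<omega>) \<le> c} \<in> sets M"
proof -
  have "excess_loss R s \<in> borel_measurable M" if "1 \<le> s" for s
    using excess_loss_measurable[OF assms that order_refl]
    by (rule measurable_from_subalg[OF sigma_finite_subalgebra.subalg[OF hist_subalgebra]])
  then have "(\<lambda>\<omega>. \<Sum>s\<in>{1..t}. excess_loss R s \<omega>) \<in> borel_measurable M"
    by (intro borel_measurable_sum) simp
  then show ?thesis
    unfolding borel_measurable_iff_le by blast
qed

lemma bad_cover_Suc:
  "bad_cover (Suc t) = (\<Union>R\<in>bad_net. {\<omega>\<in>space M. (\<Sum>s\<in>{1..Suc t}. excess_loss R s \<omega>) \<le> \<gamma> * real (Suc t) / 8})"
  unfolding bad_cover_def by simp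

lemma sets_bad_cover: "bad_cover t \<in> sets M"
proof (cases t)
  case (Suc n)
  show ?thesis
    unfolding Suc bad_cover_Suc using bad_net(1) sets_excess_loss_sum_le
    by (intro sets.finite_UN bad_net(2)) blast
qed (simp add: bad_cover_def)

lemma measure_bad_cover:
  "measure M (bad_cover t) \<le> real (covering_number d0 pi0 F (\<gamma> / 32)) * exp (- rate * real t)"
proof (cases t)
  case 0
  then show ?thesis
    using covering_number_ge_1 by (simp add: bad_cover_def prob_space)
next
  case (Suc n)
  have "measure M (bad_cover t) \<le> (\<Sum>R\<in>bad_net.
      prob {\<omega>\<in>space M. (\<Sum>s\<in>{1..t}. excess_loss R s \<omega>) \<le> \<gamma> * real t / 8})"
    unfolding Suc bad_cover_Suc using bad_net(1) sets_excess_loss_sum_le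
    by (intro finite_measure_subadditive_finite bad_net(2)) blast
  also have "\<dots> \<le> (\<Sum>R\<in>bad_net. exp (- rate * real t))"
    using bad_net(1) excess_loss_tail by (intro sum_mono) auto
  also have "\<dots> \<le> real (covering_number d0 pi0 F (\<gamma> / 32)) * exp (- rate * real t)"
    using bad_net(3) by simp
  finally show ?thesis .
qed

lemma AE_bad_estimate_in_bad_cover:
  "AE \<omega> in M. \<forall>t. \<epsilon>0 \<le> gap d0 aR Rs (Rh t \<omega>) \<longrightarrow> \<omega> \<in> bad_cover t"
  using AE_actions_in_support AE_space
proof eventually_elim
  case (elim \<omega>)
  show ?case
  proof (intro allI impI)
    fix t assume bad: "\<epsilon>0 \<le> gap d0 aR Rs (Rh t \<omega>)"
    show "\<omega> \<in> bad_cover t"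
    proof (cases "t = 0")
      case False
      then have t: "1 \<le> t" by simp
      obtain c where c: "c \<in> bad_net" "supp_le d0 pi0 (\<lambda>x a. Rh t \<omega> x a - c x a) (\<gamma> / 16)"
        using bad_net(4)[OF estimate_in_F[OF t elim(2)] bad] by blast
      have "(\<Sum>s\<in>{1..t}. excess_loss c s \<omega>) \<le> 2 * (\<gamma> / 16) * real t"
        using excess_loss_sum_le[OF t elim(2,1) supp_le_diff_swap[OF c(2)]] .
      then show ?thesis
        unfolding bad_cover_def using False c(1) elim(2) by auto
    qed (simp add: bad_cover_def elim)
  qed
qed

lemma rate_pos: "0 < rate"
  unfolding rate_def using gamma loss_bound_pos by simp

lemma prob_bad_estimate_le:
  "measure M {\<omega>\<in>space M. \<epsilon>0 \<le> gap d0 aR Rs (Rh t \<omega>)}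
    \<le> real (covering_number d0 pi0 F (\<gamma> / 32)) * exp (- rate * real t)"
proof -
  have "measure M {\<omega>\<in>space M. \<epsilon>0 \<le> gap d0 aR Rs (Rh t \<omega>)} \<le> measure M (bad_cover t)"
    using AE_bad_estimate_in_bad_cover sets_bad_cover
    by (intro finite_measure_mono_AE) (auto elim!: eventually_mono)
  also have "\<dots> \<le> real (covering_number d0 pi0 F (\<gamma> / 32)) * exp (- rate * real t)"
    by (rule measure_bad_cover)
  finally show ?thesis .
qed

lemma AE_finitely_many_bad_estimates: "AE \<omega> in M. finite {t. \<epsilon>0 \<le> gap d0 aR Rs (Rh t \<omega>)}"
proof -
  have "summable (\<lambda>t. measure M (bad_cover t))"
  proof (rule summable_comparison_test')
    show "summable (\<lambda>t. real (covering_number d0 pi0 F (\<gamma> / 32)) * exp (- rate) ^ t)"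
      using rate_pos by (intro summable_mult summable_geometric) auto
    show "norm (measure M (bad_cover t)) \<le> real (covering_number d0 pi0 F (\<gamma> / 32)) * exp (- rate) ^ t"
      for t
      using measure_bad_cover[of t] by (simp add: mult.commute flip: exp_of_nat_mult)
  qed
  then have "AE \<omega> in M. eventually (\<lambda>t. \<omega> \<in> space M - bad_cover t) sequentially"
    using sets_bad_cover by (intro borel_cantelli_AE1) (auto simp: emeasure_eq_measure)
  then show ?thesis
    using AE_bad_estimate_in_bad_cover
  proof eventually_elim
    case (elim \<omega>)
    then obtain T where "\<And>t. T \<le> t \<Longrightarrow> \<omega> \<notin> bad_cover t"
      unfolding eventually_sequentially by blast
    then have "{t. \<epsilon>0 \<le> gap d0 aR Rs (Rh t \<omega>)} \<subseteq> {..<T}"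
      using elim(2) not_le by blast
    then show ?case
      by (rule finite_subset) simp
  qed
qed

lemma expected_bad_count_le:
  "(\<integral>\<^sup>+\<omega>. (\<Sum>t. indicator {\<omega>'. \<epsilon>0 \<le> gap d0 aR Rs (Rh t \<omega>')} \<omega>) \<partial>M)
    \<le> ennreal (1 + real_of_int \<lceil>(1 / rate) * ln (2 * real (covering_number d0 pi0 F (\<gamma> / 32)))\<rceil>
        + 1 / (exp rate - 1))"
proof -
  let ?N = "real (covering_number d0 pi0 F (\<gamma> / 32))"
  have "(\<integral>\<^sup>+\<omega>. (\<Sum>t. indicator {\<omega>'. \<epsilon>0 \<le> gap d0 aR Rs (Rh t \<omega>')} \<omega>) \<partial>M)
      \<le> (\<integral>\<^sup>+\<omega>. (\<Sum>t. indicator (bad_cover t) \<omega>) \<partial>M)"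
    using AE_bad_estimate_in_bad_cover
    by (intro nn_integral_mono_AE) (auto elim!: eventually_mono intro!: suminf_le simp: indicator_def)
  also have "\<dots> = (\<Sum>t. emeasure M (bad_cover t))"
    using sets_bad_cover by (simp add: nn_integral_suminf)
  also have "\<dots> \<le> (\<Sum>t. ennreal (min 1 (?N * exp (- rate * real t))))"
    using measure_bad_cover sets_bad_cover
    by (intro suminf_le) (auto simp: emeasure_eq_measure intro!: ennreal_leI)
  also have "\<dots> \<le> ennreal (1 + real_of_int \<lceil>(1 / rate) * ln (2 * ?N)\<rceil> + 1 / (exp rate - 1))"
    using covering_number_ge_1 rate_pos by (intro suminf_min_one_exp_le) auto
  finally show ?thesis .
qed

end

theorem lemma10:
  fixes M :: "'w measure"
    and d0 :: "'x measure"
    and pi0 :: "'x \<Rightarrow> 'a::{metric_space, second_countable_topology} measure"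
    and F :: "('x \<Rightarrow> 'a \<Rightarrow> real) set"
    and aR :: "('x \<Rightarrow> 'a \<Rightarrow> real) \<Rightarrow> 'x \<Rightarrow> 'a"
    and Rs :: "'x \<Rightarrow> 'a \<Rightarrow> real"
    and K :: nat and \<eta> B \<epsilon>0 \<gamma> :: real
    and X :: "nat \<Rightarrow> 'w \<Rightarrow> 'x" and A :: "nat \<Rightarrow> 'w \<Rightarrow> nat \<Rightarrow> 'a" and Y :: "nat \<Rightarrow> 'w \<Rightarrow> nat"
    and Rh :: "nat \<Rightarrow> 'w \<Rightarrow> ('x \<Rightarrow> 'a \<Rightarrow> real)"
  assumes d0: "prob_space d0"
    and pi0_kernel: "pi0 \<in> d0 \<rightarrow>\<^sub>M prob_algebra borel"
    and K: "K \<ge> 2" and eta: "\<eta> > 0"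
    and F_meas: "\<forall>R\<in>F. (\<lambda>(x, a). R x a) \<in> borel_measurable (d0 \<Otimes>\<^sub>M borel)"
    and F_compact: "supp_compact d0 pi0 F"
    and F_bounded: "\<forall>R\<in>F. supp_le d0 pi0 R B"
    and tie: "tie_break_rule d0 pi0 F aR"
    and Rs_in: "Rs \<in> F"
    and loop: "greedy_loop M K \<eta> d0 pi0 F Rs X A Y Rh"
    and eps0: "\<epsilon>0 > 0" and gamma: "\<gamma> > 0"
    and margin: "\<forall>t\<ge>1. \<forall>R\<in>F. gap d0 aR Rs R \<ge> \<epsilon>0 \<longrightarrow>
        (AE \<omega> in M. real_cond_exp M (hist M K d0 X A Y (t - 1))
             (\<lambda>\<omega>. round_loss K X A Y t R \<omega> - round_loss K X A Y t Rs \<omega>) \<omega> \<ge> \<gamma>)"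
  shows "let lmax = ln (real K) + 2 * B;
             N\<gamma> = real (covering_number d0 pi0 F (\<gamma> / 32));
             c\<gamma> = \<gamma>\<^sup>2 / (128 * lmax\<^sup>2)
         in (\<forall>t\<ge>1. measure M {\<omega>\<in>space M. gap d0 aR Rs (Rh t \<omega>) \<ge> \<epsilon>0}
                     \<le> 2 * N\<gamma> * exp (- c\<gamma> * real t))
          \<and> (AE \<omega> in M. finite {t. gap d0 aR Rs (Rh t \<omega>) \<ge> \<epsilon>0})
          \<and> (\<integral>\<^sup>+\<omega>. (\<Sum>t. indicator {\<omega>'. gap d0 aR Rs (Rh t \<omega>') \<ge> \<epsilon>0} \<omega>) \<partial>M)
               \<le> ennreal (1 + real_of_int \<lceil>(1 / c\<gamma>) * ln (2 * N\<gamma>)\<rceil> + 1 / (exp c\<gamma> - 1))"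
proof -
  interpret greedy_run M d0 pi0 F aR Rs K \<eta> B \<epsilon>0 \<gamma> X A Y Rh
    by (rule greedy_run.intro[OF d0 pi0_kernel K F_meas F_compact F_bounded Rs_in loop gamma margin])
  have lets: "ln (real K) + 2 * B = loss_bound" "\<gamma>\<^sup>2 / (128 * loss_bound\<^sup>2) = rate"
    unfolding loss_bound_def rate_def by simp_all
  show ?thesis
    unfolding Let_def lets
  proof (intro conjI allI impI)
    fix t :: nat
    have "real (covering_number d0 pi0 F (\<gamma> / 32)) * exp (- rate * real t)
        \<le> 2 * real (covering_number d0 pi0 F (\<gamma> / 32)) * exp (- rate * real t)"
      by (intro mult_right_mono) auto
    with prob_bad_estimate_le[of t]
    show "measure M {\<omega>\<in>space M. gap d0 aR Rs (Rh t \<omega>) \<ge> \<epsilon>0}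
        \<le> 2 * real (covering_number d0 pi0 F (\<gamma> / 32)) * exp (- rate * real t)"
      by (rule order_trans)
  qed (fact AE_finitely_many_bad_estimates expected_bad_count_le)+
qed

end
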